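(* Let $K_1,K_2\subset\mathbb{C}$ be compacta such that $K_1\cap K_2$ is a finite set, and let $K=K_1\cup K_2$. Suppose that for every $x\in K_1\cap K_2$ and for $i=1,2$, the element of $\mathcal{D}_{K_i}^{PS}$ containing $x$ equals $\{x\}$. Then $\mathcal{D}_K^{PS}=\mathcal{D}_{K_1}^{PS}\cup\mathcal{D}_{K_2}^{PS}$. In particular, $\{x\}\in\mathcal{D}_K^{PS}$ for all $x\in K_1\cap K_2$.
   Context: A Peano space is a compactum with at most countably many non-degenerate components, each locally connected, and for each $C>0$ only finitely many of diameter $>C$. For a compactum $X\subset\hat{\mathbb{C}}$, $\mathcal{D}_X^{PS}$ is the finest monotone (upper semicontinuous, into subcontinua) decomposition of $X$ whose quotient hyperspace is a Peano space (its existence is known). *)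

theory Defs
  imports "HOL-Analysis.Analysis"
begin

definition set_diam :: "('a \<Rightarrow> 'a \<Rightarrow> real) \<Rightarrow> 'a set \<Rightarrow> real" where
  "set_diam d C = Sup {d x y | x y. x \<in> C \<and> y \<in> C}"

definition peano_space :: "'a topology \<Rightarrow> bool" where
  "peano_space T \<longleftrightarrow> compact_space T \<and>
     (\<exists>M d. Metric_space M d \<and> T = Metric_space.mtopology M d \<and>
        (\<forall>c>0. finite {C \<in> connected_components_of T. set_diam d C > c})) \<and>
     countable {C \<in> connected_components_of T. \<not> (\<exists>a. C = {a})} \<and>
     (\<forall>C \<in> connected_components_of T. \<not> (\<exists>a. C = {a}) \<longrightarrow>
        locally_connected_space (subtopology T C))"

definition monotone_decomp :: "'a::topological_space set \<Rightarrow> 'a set set \<Rightarrow> bool" where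
  "monotone_decomp K D \<longleftrightarrow>
     \<Union>D = K \<and>
     (\<forall>d\<in>D. d \<noteq> {} \<and> compact d \<and> connected d) \<and>
     (\<forall>d\<in>D. \<forall>e\<in>D. d \<noteq> e \<longrightarrow> d \<inter> e = {}) \<and>
     (\<forall>d\<in>D. \<forall>U. open U \<and> d \<subseteq> U \<longrightarrow>
        (\<exists>V. open V \<and> d \<subseteq> V \<and> (\<forall>e\<in>D. e \<inter> V \<noteq> {} \<longrightarrow> e \<subseteq> U)))"

definition decomp_proj :: "'a set set \<Rightarrow> 'a \<Rightarrow> 'a set" where
  "decomp_proj D x = (THE d. d \<in> D \<and> x \<in> d)"

definition decomp_topology :: "'a::topological_space set \<Rightarrow> 'a set set \<Rightarrow> 'a set topology" where
  "decomp_topology K D = topology (\<lambda>W. W \<subseteq> D \<and>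
      openin (top_of_set K) {x \<in> K. decomp_proj D x \<in> W})"

lemma istopology_decomp: "istopology (\<lambda>W. W \<subseteq> D \<and>
      openin (top_of_set K) {x \<in> K. decomp_proj D x \<in> W})"
proof -
  have i: "{x \<in> K. decomp_proj D x \<in> S \<inter> T} =
        {x \<in> K. decomp_proj D x \<in> S} \<inter> {x \<in> K. decomp_proj D x \<in> T}" for S T by auto
  have u: "{x \<in> K. decomp_proj D x \<in> \<Union>F} =
        \<Union> ((\<lambda>W. {x \<in> K. decomp_proj D x \<in> W}) ` F)" for F by auto
  show ?thesis unfolding istopology_def
    by (intro conjI allI impI; (simp only: i u)?; blast intro: openin_Int openin_Union)
qed

definition is_DPS :: "'a::topological_space set \<Rightarrow> 'a set set \<Rightarrow> bool" where
  "is_DPS K D \<longleftrightarrow> monotone_decomp K D \<and> peano_space (decomp_topology K D) \<and>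
     (\<forall>D'. monotone_decomp K D' \<and> peano_space (decomp_topology K D') \<longrightarrow>
        (\<forall>d\<in>D. \<exists>d'\<in>D'. d \<subseteq> d'))"

end

theory Submission
  imports Defs
begin

text \<open>The decomposition D1 \<union> D2 of K is monotone, and its hyperspace is covered by the
  hyperspaces of D1 and D2 as two closed subspaces meeting in finitely many points; a compactum
  glued from two Peano spaces along a finite set is again a Peano space (the metrics can be glued,
  and every new component is a finite union of old ones). By minimality every element of D_K^PS
  then lies in an element of D1 \<union> D2, so K1 and K2 are saturated and D_K^PS splits into monotone
  decompositions of K1 and K2. Their hyperspaces are closed subspaces with finite frontier of a
  Peano space, hence Peano, and minimality of D1 and D2 gives the reverse refinement; two
  partitions refining each other coincide.\<close>

section \<open>Components of closed subspaces with finite frontier\<close>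

lemma frontier_of_closedin:
  "closedin X S \<Longrightarrow> X frontier_of S = S \<inter> X closure_of (topspace X - S)"
  by (simp add: frontier_of_closures closure_of_closedin)

lemma frontier_of_closed_cover:
  assumes "closedin T A" "closedin T B" "A \<union> B = topspace T"
  shows "T frontier_of A \<subseteq> A \<inter> B"
proof -
  have "T closure_of (topspace T - A) \<subseteq> B"
    using assms by (intro closure_of_minimal) auto
  then show ?thesis using assms(1) by (auto simp: frontier_of_closedin)
qed

lemma connected_components_of_eq_connected_component_of:
  assumes "C \<in> connected_components_of X" and "x \<in> C"
  shows "C = connected_component_of_set X x"
proof -
  obtain a where "C = connected_component_of_set X a"
    using assms(1) unfolding connected_components_of_def by blast
  with assms(2) show ?thesis by (metis connected_component_of_equiv mem_Collect_eq)
qed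

lemma connected_component_of_set_mem:
  assumes "x \<in> topspace X"
  shows "connected_component_of_set X x \<in> connected_components_of X"
    and "x \<in> connected_component_of_set X x"
  using assms by (simp_all add: connected_component_in_connected_components_of connected_component_of_refl)

lemma connected_components_of_clopen_superset:
  assumes C: "C \<in> connected_components_of (subtopology T S)"
    and U: "closedin T U" "openin T U" "C \<subseteq> U" "U \<subseteq> S"
  shows "C \<in> connected_components_of T"
proof -
  obtain x where x: "x \<in> C" using nonempty_connected_components_of[OF C] by blast
  have xT: "x \<in> topspace T" using connected_components_of_subset[OF C] x by auto
  define P where "P = connected_component_of_set T x"
  have P: "P \<in> connected_components_of T" "x \<in> P"
    unfolding P_def using connected_component_of_set_mem[OF xT] by auto
  have Pc: "connectedin T P" using P(1) by (rule connectedin_connected_components_of)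
  have "P \<subseteq> U"
    using connectedin_clopen_cases[OF Pc U(1,2)] P(2) x U(3) by (auto simp: disjnt_def)
  then have "connectedin (subtopology T S) P" using Pc U(4) by (auto simp: connectedin_subtopology)
  then have "P \<subseteq> C" using connected_components_of_maximal[OF C] P(2) x by (auto simp: disjnt_def)
  moreover have "C \<subseteq> P"
  proof -
    have "connectedin T C"
      using connectedin_connected_components_of[OF C] by (simp add: connectedin_subtopology)
    then show ?thesis unfolding P_def using x by (rule connected_component_of_maximal)
  qed
  ultimately show ?thesis using P(1) by simp
qed

lemma connected_components_of_subtopology_frontier:
  assumes cT: "compact_space T" and hT: "Hausdorff_space T" and S: "closedin T S"
    and fin: "finite (T frontier_of S)"
    and C: "C \<in> connected_components_of (subtopology T S)"
    and dis: "C \<inter> T frontier_of S = {}"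
  shows "C \<in> connected_components_of T"
proof -
  let ?X = "subtopology T S"
  have SX: "S \<subseteq> topspace T" using S closedin_subset by blast
  have cX: "compact_space ?X" by (simp add: S cT closedin_compact_space compact_space_subtopology)
  have hX: "Hausdorff_space ?X" by (simp add: Hausdorff_space_subtopology hT)
  have CX: "compactin ?X C" by (simp add: C cX closedin_compact_space closedin_connected_components_of)
  have "closedin ?X (T frontier_of S)"
    using Hausdorff_imp_t1_space[OF hX] fin frontier_of_subset_closedin[OF S] SX
    unfolding t1_space_closedin_finite by auto
  then have W: "openin ?X (S - T frontier_of S)"
    by (metis SX closedin_def topspace_subtopology_subset)
  have "C \<subseteq> S - T frontier_of S"
    using connected_components_of_subset[OF C] dis by auto
  \<comment> \<open>Wilder's theorem: a set clopen in S around C missing the frontier; it is open in T.\<close>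
  then obtain U V where UV: "openin ?X U" "openin ?X V" "disjnt U V" "U \<union> V = topspace ?X"
      "C \<subseteq> U" "U \<subseteq> S - T frontier_of S"
    by (rule wilder_locally_compact_component_thm[OF compact_imp_locally_compact_space[OF cX] hX C CX W])
  have "U = topspace ?X - V" using UV(3,4) by (auto simp: disjnt_def)
  then have "closedin ?X U" using UV(2) by (metis closedin_diff closedin_topspace)
  then have Ucl: "closedin T U" using S by (rule closedin_trans_full)
  obtain Ob where Ob: "openin T Ob" "U = Ob \<inter> S" using UV(1) unfolding openin_subtopology by blast
  have "U \<subseteq> T interior_of S"
    using UV(6) SX by (auto simp: frontier_of_closedin[OF S] interior_of_closure_of)
  then have "U = Ob \<inter> T interior_of S" using Ob(2) interior_of_subset[of T S] by blast
  then have "openin T U" using openin_Int[OF Ob(1) openin_interior_of] by simp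
  then show ?thesis
    using connected_components_of_clopen_superset[OF C Ucl _ UV(5)] UV(6) by blast
qed

lemma connectedin_Int_closedin_pinched_aux:
  assumes U: "connectedin T U" and S: "closedin T S" and x: "x \<in> U" "x \<in> S"
    and int: "\<And>z. z \<in> U \<Longrightarrow> z \<in> S \<Longrightarrow> z \<noteq> x \<Longrightarrow> z \<in> T interior_of S"
    and E: "openin T E1" "openin T E2" "U \<inter> S \<subseteq> E1 \<union> E2" "E1 \<inter> E2 \<inter> (U \<inter> S) = {}"
           "E2 \<inter> (U \<inter> S) \<noteq> {}" "x \<in> E1"
  shows False
proof -
  define G1 where "G1 = E1 \<union> (topspace T - S)"
  define G2 where "G2 = E2 \<inter> T interior_of S"
  have o1: "openin T G1" unfolding G1_def using E(1) S by (simp add: openin_Un openin_diff)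
  have o2: "openin T G2" unfolding G2_def using E(2) by (simp add: openin_Int)
  have IS: "T interior_of S \<subseteq> S" by (rule interior_of_subset)
  have UT: "U \<subseteq> topspace T" using U connectedin_subset_topspace by blast
  have c1: "U \<subseteq> G1 \<union> G2"
  proof
    fix z assume z: "z \<in> U"
    show "z \<in> G1 \<union> G2"
    proof (cases "z \<in> S")
      case False then show ?thesis using z UT unfolding G1_def by blast
    next
      case True
      then have "z \<in> E1 \<or> z \<in> E2" using E(3) z by blast
      moreover have "z \<in> E2 \<Longrightarrow> z \<noteq> x \<Longrightarrow> z \<in> T interior_of S" using int z True by blast
      ultimately show ?thesis unfolding G1_def G2_def using E(6) by blast
    qed
  qed
  have c2: "G1 \<inter> G2 \<inter> U = {}"
    unfolding G1_def G2_def using E(4) IS by blast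
  have c3: "G1 \<inter> U \<noteq> {}" unfolding G1_def using x E(6) by blast
  obtain z where z: "z \<in> E2" "z \<in> U" "z \<in> S" using E(5) by blast
  have "z \<noteq> x" using z E(4,6) x by blast
  then have "z \<in> T interior_of S" using int z by blast
  then have c4: "G2 \<inter> U \<noteq> {}" unfolding G2_def using z by blast
  show False using U o1 o2 c1 c2 c3 c4 unfolding connectedin by blast
qed

lemma connectedin_Int_closedin_pinched:
  assumes U: "connectedin T U" and S: "closedin T S" and x: "x \<in> U" "x \<in> S"
    and int: "\<And>z. z \<in> U \<Longrightarrow> z \<in> S \<Longrightarrow> z \<noteq> x \<Longrightarrow> z \<in> T interior_of S"
  shows "connectedin T (U \<inter> S)"
proof -
  have UT: "U \<subseteq> topspace T" using U connectedin_subset_topspace by blast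
  have "\<not> (openin T E1 \<and> openin T E2 \<and> U \<inter> S \<subseteq> E1 \<union> E2 \<and> E1 \<inter> E2 \<inter> (U \<inter> S) = {} \<and>
           E1 \<inter> (U \<inter> S) \<noteq> {} \<and> E2 \<inter> (U \<inter> S) \<noteq> {})" for E1 E2
  proof
    assume H: "openin T E1 \<and> openin T E2 \<and> U \<inter> S \<subseteq> E1 \<union> E2 \<and> E1 \<inter> E2 \<inter> (U \<inter> S) = {} \<and>
           E1 \<inter> (U \<inter> S) \<noteq> {} \<and> E2 \<inter> (U \<inter> S) \<noteq> {}"
    then have "x \<in> E1 \<or> x \<in> E2" using x by blast
    then show False
    proof
      assume "x \<in> E1"
      then show False using connectedin_Int_closedin_pinched_aux[OF U S x int, of E1 E2] H by blast
    next
      assume "x \<in> E2"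
      moreover have "E2 \<inter> E1 \<inter> (U \<inter> S) = {}" using H by blast
      ultimately show False using connectedin_Int_closedin_pinched_aux[OF U S x int, of E2 E1] H by blast
    qed
  qed
  then show ?thesis unfolding connectedin using UT by blast
qed

text \<open>Around x \<in> C take a connected neighbourhood of x in the component of T through x that
  avoids the other (finitely many) frontier points of S: its trace on S stays connected, as only x
  can be a frontier point in it, and hence lies in C.\<close>

lemma locally_connected_space_components_of_closedin:
  assumes hT: "Hausdorff_space T" and S: "closedin T S"
   and fin: "finite (T frontier_of S)"
   and C: "C \<in> connected_components_of (subtopology T S)"
   and Plc: "\<And>P. P \<in> connected_components_of T \<Longrightarrow> locally_connected_space (subtopology T P)"
  shows "locally_connected_space (subtopology T C)"
  unfolding locally_connected_space_im_kleinen
proof (intro allI impI, elim conjE)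
  fix V x assume V: "openin (subtopology T C) V" and xV: "x \<in> V"
  define Bd where "Bd = T frontier_of S"
  have SX: "S \<subseteq> topspace T" using S closedin_subset by blast
  have CS: "C \<subseteq> S" using connected_components_of_subset[OF C] SX by auto
  obtain W0 where W0: "openin T W0" "V = W0 \<inter> C" using V unfolding openin_subtopology by blast
  have xC: "x \<in> C" using xV W0 by blast
  have xT: "x \<in> topspace T" using xC CS SX by blast
  define P where "P = connected_component_of_set T x"
  have PC: "P \<in> connected_components_of T" unfolding P_def
    using connected_component_in_connected_components_of[of T x] xT by simp
  have xP: "x \<in> P" unfolding P_def mem_Collect_eq using xT by (rule connected_component_of_refl[THEN iffD2])
  have Cconn: "connectedin T C"
  proof -
    have "connectedin (subtopology T S) C" using C by (rule connectedin_connected_components_of)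
    then show ?thesis unfolding connectedin_subtopology by blast
  qed
  have CP: "C \<subseteq> P" unfolding P_def using Cconn xC by (rule connected_component_of_maximal)
  have t1: "t1_space T" using hT Hausdorff_imp_t1_space by blast
  have "closedin T (Bd - {x})"
  proof -
    have "Bd - {x} \<subseteq> topspace T" unfolding Bd_def using frontier_of_subset_topspace[of T S] by blast
    moreover have "finite (Bd - {x})" using fin unfolding Bd_def by simp
    ultimately show ?thesis using t1 unfolding t1_space_closedin_finite by blast
  qed
  then have W1: "openin T (W0 - (Bd - {x}))" using W0(1) by (simp add: openin_diff)
  have "openin (subtopology T P) ((W0 - (Bd - {x})) \<inter> P)"
    unfolding openin_subtopology using W1 by blast
  moreover have "x \<in> (W0 - (Bd - {x})) \<inter> P" using xV W0 xP by blast
  ultimately obtain U1 where U1: "openin (subtopology T P) U1" "connectedin (subtopology T P) U1"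
     "x \<in> U1" "U1 \<subseteq> (W0 - (Bd - {x})) \<inter> P"
    using Plc[OF PC] unfolding locally_connected_space by blast
  obtain O1 where O1: "openin T O1" "U1 = O1 \<inter> P" using U1(1) unfolding openin_subtopology by blast
  have U1c: "connectedin T U1" using U1(2) unfolding connectedin_subtopology by blast
  have int: "z \<in> T interior_of S" if "z \<in> U1" "z \<in> S" "z \<noteq> x" for z
  proof -
    have "z \<notin> Bd" using that U1(4) by blast
    then have "z \<notin> T closure_of (topspace T - S)" using that(2) unfolding Bd_def frontier_of_closedin[OF S] by blast
    then show ?thesis using SX that(2) by (simp add: interior_of_closure_of subsetD)
  qed
  have Kc: "connectedin T (U1 \<inter> S)"
    using connectedin_Int_closedin_pinched[OF U1c S U1(3) _ int] xC CS by blast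
  have "connectedin (subtopology T S) (U1 \<inter> S)" unfolding connectedin_subtopology using Kc by blast
  moreover have "\<not> disjnt C (U1 \<inter> S)" using xC CS U1(3) unfolding disjnt_def by blast
  ultimately have KC: "U1 \<inter> S \<subseteq> C" using connected_components_of_maximal[OF C] by blast
  show "\<exists>U. openin (subtopology T C) U \<and> x \<in> U \<and> U \<subseteq> V \<and>
             (\<forall>y\<in>U. \<exists>C'. connectedin (subtopology T C) C' \<and> C' \<subseteq> V \<and> x \<in> C' \<and> y \<in> C')"
  proof (intro exI conjI ballI)
    show "openin (subtopology T C) (O1 \<inter> C)" unfolding openin_subtopology using O1(1) by blast
    show "x \<in> O1 \<inter> C" using U1(3) O1(2) xC by blast
    show "O1 \<inter> C \<subseteq> V" using O1(2) CP U1(4) W0(2) by blast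
    fix y assume y: "y \<in> O1 \<inter> C"
    show "connectedin (subtopology T C) (U1 \<inter> S)" unfolding connectedin_subtopology using Kc KC by blast
    show "U1 \<inter> S \<subseteq> V" using KC U1(4) W0(2) by blast
    show "x \<in> U1 \<inter> S" using U1(3) xC CS by blast
    show "y \<in> U1 \<inter> S" using y O1(2) CP CS by blast
  qed
qed

lemma locally_connected_subtopology_im_kleinen:
  assumes lc: "locally_connected_space (subtopology T G)" and W: "openin T W" and x: "x \<in> W" "x \<in> G"
  obtains N where "openin T N" "x \<in> N"
    "\<And>y. y \<in> N \<inter> G \<Longrightarrow> \<exists>C. connectedin T C \<and> C \<subseteq> W \<inter> G \<and> x \<in> C \<and> y \<in> C"
proof -
  have oG: "openin (subtopology T G) (W \<inter> G)" unfolding openin_subtopology using W by blast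
  obtain U where U: "openin (subtopology T G) U" "x \<in> U" "U \<subseteq> W \<inter> G"
    "\<forall>y\<in>U. \<exists>C. connectedin (subtopology T G) C \<and> C \<subseteq> W \<inter> G \<and> x \<in> C \<and> y \<in> C"
    using lc[unfolded locally_connected_space_im_kleinen, rule_format, OF conjI[OF oG IntI[OF x]]]
    by (elim exE conjE)
  obtain N where N: "openin T N" "U = N \<inter> G" using U(1) unfolding openin_subtopology by blast
  show ?thesis
  proof (rule that[OF N(1)])
    show "x \<in> N" using U(2) N(2) by blast
    fix y assume "y \<in> N \<inter> G"
    then obtain C where "connectedin (subtopology T G) C" "C \<subseteq> W \<inter> G" "x \<in> C" "y \<in> C"
      using U(4) N(2) by blast
    then show "\<exists>C. connectedin T C \<and> C \<subseteq> W \<inter> G \<and> x \<in> C \<and> y \<in> C"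
      unfolding connectedin_subtopology by blast
  qed
qed

text \<open>At a point x, the members of the finite family not containing x are cut away by a closed
  set; in each member containing x a neighbourhood of x is joined to x by connected sets, and the
  intersection of these finitely many neighbourhoods works for the union.\<close>

lemma locally_connected_space_finite_Union_closedin:
  assumes G: "finite \<G>" and Gcl: "\<And>G. G \<in> \<G> \<Longrightarrow> closedin T G"
    and Glc: "\<And>G. G \<in> \<G> \<Longrightarrow> locally_connected_space (subtopology T G)"
  shows "locally_connected_space (subtopology T (\<Union>\<G>))"
  unfolding locally_connected_space_im_kleinen
proof (intro allI impI, elim conjE)
  fix V x assume V: "openin (subtopology T (\<Union>\<G>)) V" and xV: "x \<in> V"
  obtain W0 where W0: "openin T W0" "V = W0 \<inter> \<Union>\<G>" using V unfolding openin_subtopology by blast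
  define Gx where "Gx = {G \<in> \<G>. x \<in> G}"
  define W where "W = W0 - \<Union>{G \<in> \<G>. x \<notin> G}"
  have "closedin T (\<Union>{G \<in> \<G>. x \<notin> G})" using G Gcl by (intro closedin_Union) auto
  then have Wo: "openin T W" unfolding W_def using W0(1) by (simp add: openin_diff)
  have xW: "x \<in> W" unfolding W_def using xV W0(2) by blast
  have "\<forall>G\<in>Gx. \<exists>N. openin T N \<and> x \<in> N \<and>
      (\<forall>y \<in> N \<inter> G. \<exists>C. connectedin T C \<and> C \<subseteq> W \<inter> G \<and> x \<in> C \<and> y \<in> C)"
  proof
    fix G assume "G \<in> Gx"
    then have GG: "G \<in> \<G>" "x \<in> G" unfolding Gx_def by auto
    obtain N where "openin T N" "x \<in> N"
      "\<And>y. y \<in> N \<inter> G \<Longrightarrow> \<exists>C. connectedin T C \<and> C \<subseteq> W \<inter> G \<and> x \<in> C \<and> y \<in> C"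
      using locally_connected_subtopology_im_kleinen[OF Glc[OF GG(1)] Wo xW GG(2)] by blast
    then show "\<exists>N. openin T N \<and> x \<in> N \<and>
        (\<forall>y \<in> N \<inter> G. \<exists>C. connectedin T C \<and> C \<subseteq> W \<inter> G \<and> x \<in> C \<and> y \<in> C)"
      by blast
  qed
  from bchoice[OF this] obtain f where f: "\<forall>G\<in>Gx. openin T (f G) \<and> x \<in> f G \<and>
      (\<forall>y \<in> f G \<inter> G. \<exists>C. connectedin T C \<and> C \<subseteq> W \<inter> G \<and> x \<in> C \<and> y \<in> C)" ..
  have fo: "openin T (f G)" and fx: "x \<in> f G" if "G \<in> Gx" for G using f that by blast+
  have fc: "\<exists>C. connectedin T C \<and> C \<subseteq> W \<inter> G \<and> x \<in> C \<and> y \<in> C"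
    if "G \<in> Gx" "y \<in> f G" "y \<in> G" for G y using f that by blast
  define U where "U = W \<inter> \<Inter>(f ` Gx)"
  have "openin T U" unfolding U_def
  proof (rule openin_Int_Inter[OF _ Wo])
    show "finite (f ` Gx)" using G unfolding Gx_def by simp
  qed (use fo in blast)
  moreover have "x \<in> U" unfolding U_def using xW fx by blast
  moreover have "\<exists>C. connectedin (subtopology T (\<Union>\<G>)) C \<and> C \<subseteq> V \<and> x \<in> C \<and> y \<in> C"
    if y: "y \<in> U \<inter> \<Union>\<G>" for y
  proof -
    obtain G where GG: "G \<in> \<G>" "y \<in> G" using y by blast
    have "y \<in> W" using y unfolding U_def by blast
    then have GGx: "G \<in> Gx" using GG unfolding W_def Gx_def by blast
    then have "y \<in> f G" using y unfolding U_def by blast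
    then obtain C where C: "connectedin T C" "C \<subseteq> W \<inter> G" "x \<in> C" "y \<in> C"
      using fc[OF GGx] GG by blast
    then have "connectedin (subtopology T (\<Union>\<G>)) C" unfolding connectedin_subtopology using GG by blast
    moreover have "C \<subseteq> V" using C(2) GG W0(2) unfolding W_def by blast
    ultimately show ?thesis using C by blast
  qed
  moreover have "U \<inter> \<Union>\<G> \<subseteq> V" unfolding U_def W_def using W0(2) by blast
  ultimately show "\<exists>U. openin (subtopology T (\<Union>\<G>)) U \<and> x \<in> U \<and> U \<subseteq> V \<and>
      (\<forall>y\<in>U. \<exists>C. connectedin (subtopology T (\<Union>\<G>)) C \<and> C \<subseteq> V \<and> x \<in> C \<and> y \<in> C)"
    using xV W0(2) by (intro exI[of _ "U \<inter> \<Union>\<G>"]) (simp add: openin_subtopology_Int)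
qed

section \<open>Peano spaces\<close>

lemma connected_components_of_closedin_cases:
  assumes cT: "compact_space T" and hT: "Hausdorff_space T" and S: "closedin T S"
    and fin: "finite (T frontier_of S)" and C: "C \<in> connected_components_of (subtopology T S)"
  shows "C \<in> connected_components_of T \<or>
    C \<in> connected_component_of_set (subtopology T S) ` (T frontier_of S)"
proof (cases "C \<inter> T frontier_of S = {}")
  case True
  then show ?thesis using connected_components_of_subtopology_frontier[OF cT hT S fin C] by blast
next
  case False
  then obtain z where "z \<in> C" "z \<in> T frontier_of S" by blast
  then show ?thesis using connected_components_of_eq_connected_component_of[OF C] by blast
qed

lemma locally_connected_space_subtopology_singleton:
  "locally_connected_space (subtopology T {a})"
  unfolding locally_connected_space
proof (intro allI impI, elim conjE)
  fix V x assume V: "openin (subtopology T {a}) V" and x: "x \<in> V"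
  have VT: "V \<subseteq> topspace (subtopology T {a})" using openin_subset[OF V] .
  then have Vx: "V = {x}" using x by auto
  have "connectedin (subtopology T {a}) V" unfolding Vx using VT x by (auto simp: connectedin_sing)
  then show "\<exists>U. openin (subtopology T {a}) U \<and> connectedin (subtopology T {a}) U \<and> x \<in> U \<and> U \<subseteq> V"
    using V x by blast
qed

lemma peano_space_locally_connected_components:
  assumes "peano_space T" and "C \<in> connected_components_of T"
  shows "locally_connected_space (subtopology T C)"
  using assms locally_connected_space_subtopology_singleton unfolding peano_space_def by metis

lemma peano_space_closedin_finite_frontier:
  assumes P: "peano_space T" and S: "closedin T S" and fin: "finite (T frontier_of S)"
  shows "peano_space (subtopology T S)"
proof -
  have cT: "compact_space T" using P unfolding peano_space_def by (elim conjE)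
  obtain M d where Md: "Metric_space M d" "T = Metric_space.mtopology M d"
     "\<forall>c>0. finite {C \<in> connected_components_of T. set_diam d C > c}"
    using P unfolding peano_space_def by (elim conjE exE) blast
  have cnt: "countable {C \<in> connected_components_of T. \<not> (\<exists>a. C = {a})}"
    using P unfolding peano_space_def by (elim conjE)
  interpret m: Metric_space M d by (rule Md(1))
  have hT: "Hausdorff_space T" using Md(2) m.Hausdorff_space_mtopology by simp
  interpret sm: Submetric M d S
    by unfold_locales (use closedin_subset[OF S] Md(2) in auto)
  let ?I = "connected_component_of_set (subtopology T S) ` (T frontier_of S)"
  have cases: "C \<in> connected_components_of T \<or> C \<in> ?I"
    if "C \<in> connected_components_of (subtopology T S)" for C
    by (rule connected_components_of_closedin_cases[OF cT hT S fin that])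
  have finI: "finite ?I" using fin by simp
  show ?thesis unfolding peano_space_def
  proof (intro conjI)
    show "compact_space (subtopology T S)"
      using S cT by (simp add: closedin_compact_space compact_space_subtopology)
    show "\<exists>M d. Metric_space M d \<and> subtopology T S = Metric_space.mtopology M d \<and>
       (\<forall>c>0. finite {C \<in> connected_components_of (subtopology T S). c < set_diam d C})"
    proof (intro exI conjI allI impI)
      show "Metric_space S d" by (rule sm.sub.Metric_space_axioms)
      show "subtopology T S = Metric_space.mtopology S d" using sm.mtopology_submetric Md(2) by simp
      fix c :: real assume "c > 0"
      then have "finite ({C \<in> connected_components_of T. c < set_diam d C} \<union> ?I)"
        using Md(3) finI by simp
      then show "finite {C \<in> connected_components_of (subtopology T S). c < set_diam d C}"
        by (rule finite_subset[rotated]) (use cases in blast)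
    qed
    have "countable ({C \<in> connected_components_of T. \<not> (\<exists>a. C = {a})} \<union> ?I)"
      using cnt finI by (simp add: countable_finite)
    then show "countable {C \<in> connected_components_of (subtopology T S). \<not> (\<exists>a. C = {a})}"
      by (rule countable_subset[rotated]) (use cases in blast)
    show "\<forall>C\<in>connected_components_of (subtopology T S). \<not> (\<exists>a. C = {a}) \<longrightarrow>
        locally_connected_space (subtopology (subtopology T S) C)"
    proof (intro ballI impI)
      fix C assume C: "C \<in> connected_components_of (subtopology T S)"
      have "locally_connected_space (subtopology T C)"
        using locally_connected_space_components_of_closedin[OF hT S fin C]
          peano_space_locally_connected_components[OF P] .
      then show "locally_connected_space (subtopology (subtopology T S) C)"
        using connected_components_of_subset[OF C] by (simp add: subtopology_subtopology inf.absorb2)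
    qed
  qed
qed

lemma peano_space_bounded_metric:
  assumes P: "peano_space (subtopology T A)" and AT: "A \<subseteq> topspace T"
  obtains d M where "Metric_space A d" "subtopology T A = Metric_space.mtopology A d"
    "\<forall>c>0. finite {C \<in> connected_components_of (subtopology T A). c < set_diam d C}"
    "M > 0" "\<And>p q. p \<in> A \<Longrightarrow> q \<in> A \<Longrightarrow> d p q \<le> M"
proof -
  have cA: "compact_space (subtopology T A)" using P unfolding peano_space_def by (elim conjE)
  obtain N d where Nd: "Metric_space N d" "subtopology T A = Metric_space.mtopology N d"
     "\<forall>c>0. finite {C \<in> connected_components_of (subtopology T A). c < set_diam d C}"
    using P unfolding peano_space_def by (elim conjE exE) blast
  interpret m: Metric_space N d by (rule Nd(1))
  have NA: "N = A" using Nd(2) AT by (metis m.topspace_mtopology topspace_subtopology_subset)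
  have "compactin m.mtopology N" using cA Nd(2) unfolding compact_space_def by simp
  then have "m.mbounded N" by (rule m.compactin_imp_mbounded)
  then obtain M where "M > 0" "\<forall>x\<in>N. \<forall>y\<in>N. d x y \<le> M" unfolding m.mbounded_alt_pos by blast
  with Nd NA show ?thesis using that by blast
qed

section \<open>Gluing metrics along a finite set\<close>

text \<open>Gluing metric spaces X and Y along their finite overlap F = X \<inter> Y. ext_dist a extends
  dX a from X to Y by interpolating the values dX a x, x \<in> F, with bumps of radius 1/k around
  the points of F (disjoint on F by the choice of k). The pseudometric side_dist, the supremum
  over a \<in> X of |ext_dist a p - ext_dist a q|, is then dominated by dX on X and Lipschitz for dY
  on Y, while seam_dist, the distance to F truncated at 1, separates X - Y from Y - X.\<close>

locale gluing_side =
  fixes X Y :: "'a set" and dX dY :: "'a \<Rightarrow> 'a \<Rightarrow> real" and k MX :: real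
  assumes mX: "Metric_space X dX" and mY: "Metric_space Y dY"
   and finF: "finite (X \<inter> Y)"
   and MXpos: "MX > 0" and MXb: "\<And>p q. p \<in> X \<Longrightarrow> q \<in> X \<Longrightarrow> dX p q \<le> MX"
   and kpos: "k > 0" and ksep: "\<And>x y. x \<in> X \<inter> Y \<Longrightarrow> y \<in> X \<inter> Y \<Longrightarrow> x \<noteq> y \<Longrightarrow> 1 \<le> k * dY x y"
begin

definition bump :: "'a \<Rightarrow> 'a \<Rightarrow> real" where "bump x q = max 0 (1 - k * dY q x)"
definition ext_dist :: "'a \<Rightarrow> 'a \<Rightarrow> real" where
  "ext_dist a q = (if q \<in> X then dX a q else (\<Sum>x\<in>X \<inter> Y. dX a x * bump x q))"
definition side_dist :: "'a \<Rightarrow> 'a \<Rightarrow> real" where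
  "side_dist p q = Sup (insert 0 ((\<lambda>a. \<bar>ext_dist a p - ext_dist a q\<bar>) ` X))"
definition seam_dist :: "'a \<Rightarrow> real" where "seam_dist q = Min (insert 1 ((\<lambda>x. dX q x) ` (X \<inter> Y)))"

lemma dX_nonneg: "0 \<le> dX p q" using Metric_space.nonneg[OF mX] .
lemma dY_nonneg: "0 \<le> dY p q" using Metric_space.nonneg[OF mY] .

lemma bump_bounds: "0 \<le> bump x q" "bump x q \<le> 1"
  unfolding bump_def using kpos dY_nonneg[of q x] by (auto simp: mult_nonneg_nonneg)

lemma bump_seam: assumes "x \<in> X \<inter> Y" "q \<in> X \<inter> Y" shows "bump x q = (if x = q then 1 else 0)"
proof (cases "x = q")
  case True
  then have "dY q x = 0" using assms Metric_space.mdist_zero[OF mY] by auto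
  then show ?thesis unfolding bump_def using True by simp
next
  case False
  have "1 \<le> k * dY q x" using ksep[of q x] assms False by auto
  then show ?thesis unfolding bump_def using False by simp
qed

lemma bump_lipschitz: assumes "p \<in> Y" "q \<in> Y" "x \<in> Y" shows "\<bar>bump x p - bump x q\<bar> \<le> k * dY p q"
proof -
  have "\<bar>dY p x - dY q x\<bar> \<le> dY p q"
    using Metric_space.mdist_reverse_triangle[OF mY, of p x q] Metric_space.commute[OF mY, of x q] assms by simp
  then have "\<bar>k * dY p x - k * dY q x\<bar> \<le> k * dY p q"
    using kpos by (metis abs_mult abs_of_pos mult_le_cancel_left_pos right_diff_distrib)
  then show ?thesis unfolding bump_def by linarith
qed

lemma ext_dist_Y: assumes "q \<in> Y" shows "ext_dist a q = (\<Sum>x\<in>X \<inter> Y. dX a x * bump x q)"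
proof (cases "q \<in> X")
  case True
  then have qF: "q \<in> X \<inter> Y" using assms by blast
  have "(\<Sum>x\<in>X \<inter> Y. dX a x * bump x q) = (\<Sum>x\<in>X \<inter> Y. if x = q then dX a x else 0)"
    by (rule sum.cong) (use bump_seam qF in auto)
  also have "\<dots> = dX a q" using finF qF by simp
  finally show ?thesis unfolding ext_dist_def using True by simp
qed (simp add: ext_dist_def)

definition ext_bound where "ext_bound = MX * (1 + real (card (X \<inter> Y)))"

lemma ext_dist_bounds: assumes a: "a \<in> X" shows "0 \<le> ext_dist a q" "ext_dist a q \<le> ext_bound"
proof -
  have "(\<Sum>x\<in>X \<inter> Y. dX a x * bump x q) \<le> (\<Sum>x\<in>X \<inter> Y. MX)"
  proof (rule sum_mono)
    fix x assume x: "x \<in> X \<inter> Y"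
    have "dX a x * bump x q \<le> MX * 1"
      by (rule mult_mono) (use MXb[of a x] a x bump_bounds[of x q] MXpos in auto)
    then show "dX a x * bump x q \<le> MX" by simp
  qed
  then have s1: "(\<Sum>x\<in>X \<inter> Y. dX a x * bump x q) \<le> MX * real (card (X \<inter> Y))" by (simp add: mult.commute)
  have s0: "0 \<le> (\<Sum>x\<in>X \<inter> Y. dX a x * bump x q)"
    by (rule sum_nonneg) (use dX_nonneg bump_bounds in auto)
  show "0 \<le> ext_dist a q" unfolding ext_dist_def using s0 dX_nonneg by simp
  have "MX \<le> ext_bound" "MX * real (card (X \<inter> Y)) \<le> ext_bound" unfolding ext_bound_def using MXpos by (auto simp: algebra_simps)
  then show "ext_dist a q \<le> ext_bound" unfolding ext_dist_def using s1 MXb[OF a, of q] by (cases "q \<in> X") auto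
qed

lemma ext_dist_diff_bound: assumes "a \<in> X" shows "\<bar>ext_dist a p - ext_dist a q\<bar> \<le> ext_bound"
  using ext_dist_bounds[OF assms, of p] ext_dist_bounds[OF assms, of q] by linarith

lemma side_dist_bdd: "bdd_above (insert 0 ((\<lambda>a. \<bar>ext_dist a p - ext_dist a q\<bar>) ` X))"
  unfolding bdd_above_def using ext_dist_diff_bound MXpos
  by (intro exI[of _ ext_bound]) (auto simp: ext_bound_def)

lemma side_dist_upper: "a \<in> X \<Longrightarrow> \<bar>ext_dist a p - ext_dist a q\<bar> \<le> side_dist p q"
  unfolding side_dist_def by (rule cSup_upper[OF _ side_dist_bdd]) blast

lemma side_dist_nonneg: "0 \<le> side_dist p q"
  unfolding side_dist_def by (rule cSup_upper[OF _ side_dist_bdd]) blast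

lemma side_dist_least: "0 \<le> c \<Longrightarrow> (\<And>a. a \<in> X \<Longrightarrow> \<bar>ext_dist a p - ext_dist a q\<bar> \<le> c) \<Longrightarrow> side_dist p q \<le> c"
  unfolding side_dist_def by (rule cSup_least) auto

lemma side_dist_commute: "side_dist p q = side_dist q p"
  unfolding side_dist_def by (simp add: abs_minus_commute)

lemma side_dist_refl: "side_dist p p = 0"
  using side_dist_least[of 0 p p] side_dist_nonneg[of p p] by simp

lemma side_dist_triangle: "side_dist p r \<le> side_dist p q + side_dist q r"
proof (rule side_dist_least)
  show "0 \<le> side_dist p q + side_dist q r" using side_dist_nonneg by (simp add: add_nonneg_nonneg)
  fix a assume a: "a \<in> X"
  have "\<bar>ext_dist a p - ext_dist a r\<bar> \<le> \<bar>ext_dist a p - ext_dist a q\<bar> + \<bar>ext_dist a q - ext_dist a r\<bar>" by linarith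
  then show "\<bar>ext_dist a p - ext_dist a r\<bar> \<le> side_dist p q + side_dist q r" using side_dist_upper[OF a, of p q] side_dist_upper[OF a, of q r] by linarith
qed

lemma side_dist_le_X: assumes "p \<in> X" "q \<in> X" shows "side_dist p q \<le> dX p q"
proof (rule side_dist_least)
  show "0 \<le> dX p q" by (rule dX_nonneg)
  fix a assume a: "a \<in> X"
  have "\<bar>dX a p - dX p q\<bar> \<le> dX a q"
    using Metric_space.mdist_reverse_triangle[OF mX, of a p q] assms a by simp
  moreover have "\<bar>dX a q - dX p q\<bar> \<le> dX a p"
    using Metric_space.mdist_reverse_triangle[OF mX, of a q p] Metric_space.commute[OF mX, of q p] assms a by simp
  ultimately have "\<bar>dX a p - dX a q\<bar> \<le> dX p q" by linarith
  then show "\<bar>ext_dist a p - ext_dist a q\<bar> \<le> dX p q" unfolding ext_dist_def using assms by simp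
qed

lemma side_dist_lipschitz_Y: assumes "p \<in> Y" "q \<in> Y" shows "side_dist p q \<le> real (card (X \<inter> Y)) * MX * k * dY p q"
proof (rule side_dist_least)
  show "0 \<le> real (card (X \<inter> Y)) * MX * k * dY p q"
    using MXpos kpos dY_nonneg by simp
  fix a assume a: "a \<in> X"
  have "\<bar>ext_dist a p - ext_dist a q\<bar> = \<bar>\<Sum>x\<in>X \<inter> Y. dX a x * (bump x p - bump x q)\<bar>"
    unfolding ext_dist_Y[OF assms(1)] ext_dist_Y[OF assms(2)] by (simp add: sum_subtractf right_diff_distrib)
  also have "\<dots> \<le> (\<Sum>x\<in>X \<inter> Y. \<bar>dX a x * (bump x p - bump x q)\<bar>)" by (rule sum_abs)
  also have "\<dots> \<le> (\<Sum>x\<in>X \<inter> Y. MX * (k * dY p q))"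
  proof (rule sum_mono)
    fix x assume x: "x \<in> X \<inter> Y"
    have "\<bar>dX a x * (bump x p - bump x q)\<bar> = dX a x * \<bar>bump x p - bump x q\<bar>"
      using dX_nonneg by (simp add: abs_mult)
    also have "\<dots> \<le> MX * (k * dY p q)"
      by (rule mult_mono) (use MXb[of a x] a x bump_lipschitz[of p q x] assms MXpos in auto)
    finally show "\<bar>dX a x * (bump x p - bump x q)\<bar> \<le> MX * (k * dY p q)" .
  qed
  also have "\<dots> = real (card (X \<inter> Y)) * MX * k * dY p q" by simp
  finally show "\<bar>ext_dist a p - ext_dist a q\<bar> \<le> real (card (X \<inter> Y)) * MX * k * dY p q" .
qed

lemma side_dist_pos: assumes "p \<in> X" "q \<in> X" "p \<noteq> q" shows "0 < side_dist p q"
proof -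
  have "\<bar>ext_dist p p - ext_dist p q\<bar> \<le> side_dist p q" by (rule side_dist_upper[OF assms(1)])
  moreover have "ext_dist p p = 0" unfolding ext_dist_def using assms Metric_space.mdist_zero[OF mX] by simp
  moreover have "ext_dist p q = dX p q" unfolding ext_dist_def using assms by simp
  moreover have "0 < dX p q" using Metric_space.mdist_pos_less[OF mX] assms by blast
  ultimately show ?thesis by linarith
qed

lemma seam_dist_in: "seam_dist q \<in> insert 1 ((\<lambda>x. dX q x) ` (X \<inter> Y))"
  unfolding seam_dist_def by (rule Min_in) (use finF in auto)

lemma seam_dist_le: "y \<in> insert 1 ((\<lambda>x. dX q x) ` (X \<inter> Y)) \<Longrightarrow> seam_dist q \<le> y"
  unfolding seam_dist_def by (rule Min_le) (use finF in auto)

lemma seam_dist_nonneg: "0 \<le> seam_dist q"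
  using seam_dist_in[of q] dX_nonneg by auto

lemma seam_dist_seam: assumes "q \<in> X \<inter> Y" shows "seam_dist q = 0"
proof -
  have "seam_dist q \<le> dX q q" by (rule seam_dist_le) (use assms in blast)
  then show ?thesis using seam_dist_nonneg[of q] Metric_space.mdist_zero[OF mX, of q] assms by simp
qed

lemma seam_dist_pos: assumes "q \<in> X" "q \<notin> Y" shows "0 < seam_dist q"
proof -
  have "seam_dist q \<in> insert 1 ((\<lambda>x. dX q x) ` (X \<inter> Y))" by (rule seam_dist_in)
  then consider "seam_dist q = 1" | x where "x \<in> X \<inter> Y" "seam_dist q = dX q x" by blast
  then show ?thesis
  proof cases
    case 2
    then have "q \<noteq> x" using assms by blast
    then show ?thesis using 2 Metric_space.mdist_pos_less[OF mX] assms by simp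
  qed simp
qed

lemma seam_dist_le_add: assumes "p \<in> X" "q \<in> X" shows "seam_dist p \<le> seam_dist q + dX p q"
proof -
  have "seam_dist q \<in> insert 1 ((\<lambda>x. dX q x) ` (X \<inter> Y))" by (rule seam_dist_in)
  then consider "seam_dist q = 1" | x where "x \<in> X \<inter> Y" "seam_dist q = dX q x" by blast
  then show ?thesis
  proof cases
    case 1
    have "seam_dist p \<le> 1" by (rule seam_dist_le) simp
    then show ?thesis using 1 dX_nonneg[of p q] by simp
  next
    case 2
    have "seam_dist p \<le> dX p x" by (rule seam_dist_le) (use 2 in blast)
    moreover have "dX p x \<le> dX p q + dX q x" using Metric_space.triangle[OF mX] assms 2 by blast
    ultimately show ?thesis using 2 by simp
  qed
qed

lemma seam_dist_lipschitz: assumes "p \<in> X" "q \<in> X" shows "\<bar>seam_dist p - seam_dist q\<bar> \<le> dX p q"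
  using seam_dist_le_add[OF assms] seam_dist_le_add[OF assms(2,1)] Metric_space.commute[OF mX, of q p] by linarith

end

lemma finite_separation_constant:
  assumes m: "Metric_space X d" and F: "finite F" "F \<subseteq> X"
  shows "\<exists>k>0. \<forall>x\<in>F. \<forall>y\<in>F. x \<noteq> y \<longrightarrow> 1 \<le> k * d x y"
proof -
  define P where "P = {(x,y). x \<in> F \<and> y \<in> F \<and> x \<noteq> y}"
  have finP: "finite P" unfolding P_def using finite_cartesian_product[OF F(1) F(1)]
    by (rule finite_subset[rotated]) auto
  define k where "k = 1 + (\<Sum>(x,y)\<in>P. 1 / d x y)"
  have nn: "\<And>z. z \<in> P \<Longrightarrow> 0 \<le> (\<lambda>(x,y). 1 / d x y) z"
    using Metric_space.nonneg[OF m] by auto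
  have k0: "0 \<le> (\<Sum>(x,y)\<in>P. 1 / d x y)" using nn by (intro sum_nonneg) auto
  show ?thesis
  proof (intro exI conjI ballI impI)
    show "k > 0" unfolding k_def using k0 by simp
    fix x y assume xy: "x \<in> F" "y \<in> F" "x \<noteq> y"
    then have "(x,y) \<in> P" unfolding P_def by simp
    then have "(\<lambda>(x,y). 1 / d x y) (x,y) \<le> (\<Sum>(x,y)\<in>P. 1 / d x y)"
      by (rule member_le_sum) (use nn finP in auto)
    then have "1 / d x y \<le> k" unfolding k_def by simp
    moreover have "0 < d x y" using Metric_space.mdist_pos_less[OF m] xy F(2) by blast
    ultimately show "1 \<le> k * d x y" by (simp add: divide_le_eq)
  qed
qed

text \<open>The height term separates the two sides: height is positive on X - Y, negative on
  Y - X and zero on X \<inter> Y.\<close>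

locale metric_gluing =
  left: gluing_side X Y dX dY kY MX + right: gluing_side Y X dY dX kX MY
  for X Y :: "'a set" and dX dY :: "'a \<Rightarrow> 'a \<Rightarrow> real" and kX kY MX MY :: real
begin

definition height :: "'a \<Rightarrow> real" where
  "height q = (if q \<in> X then left.seam_dist q else - right.seam_dist q)"

definition glued_dist :: "'a \<Rightarrow> 'a \<Rightarrow> real" where
  "glued_dist p q = left.side_dist p q + right.side_dist p q + \<bar>height p - height q\<bar>"

lemma height_X: "q \<in> X \<Longrightarrow> height q = left.seam_dist q"
  unfolding height_def by simp

lemma height_Y: assumes "q \<in> Y" shows "height q = - right.seam_dist q"
proof (cases "q \<in> X")
  case True
  then have "left.seam_dist q = 0" "right.seam_dist q = 0"
    using assms left.seam_dist_seam right.seam_dist_seam by auto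
  then show ?thesis unfolding height_def by simp
qed (simp add: height_def)

lemma glued_dist_lipschitz_X:
  assumes "p \<in> X" "q \<in> X"
  shows "glued_dist p q \<le> (2 + real (card (Y \<inter> X)) * MY * kX) * dX p q"
proof -
  have "left.side_dist p q \<le> dX p q" by (rule left.side_dist_le_X[OF assms])
  moreover have "right.side_dist p q \<le> real (card (Y \<inter> X)) * MY * kX * dX p q"
    by (rule right.side_dist_lipschitz_Y[OF assms])
  moreover have "\<bar>height p - height q\<bar> \<le> dX p q"
    using height_X assms left.seam_dist_lipschitz[OF assms] by simp
  ultimately show ?thesis unfolding glued_dist_def by (simp add: algebra_simps)
qed

lemma glued_dist_lipschitz_Y:
  assumes "p \<in> Y" "q \<in> Y"
  shows "glued_dist p q \<le> (2 + real (card (X \<inter> Y)) * MX * kY) * dY p q"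
proof -
  have "right.side_dist p q \<le> dY p q" by (rule right.side_dist_le_X[OF assms])
  moreover have "left.side_dist p q \<le> real (card (X \<inter> Y)) * MX * kY * dY p q"
    by (rule left.side_dist_lipschitz_Y[OF assms])
  moreover have "\<bar>height p - height q\<bar> \<le> dY p q"
    using height_Y assms right.seam_dist_lipschitz[OF assms] by (simp add: abs_minus_commute)
  ultimately show ?thesis unfolding glued_dist_def by (simp add: algebra_simps)
qed

lemma glued_dist_pos:
  assumes pq: "p \<in> X \<union> Y" "q \<in> X \<union> Y" "p \<noteq> q"
  shows "0 < glued_dist p q"
proof -
  have g: "left.side_dist p q \<le> glued_dist p q" "right.side_dist p q \<le> glued_dist p q"
    "\<bar>height p - height q\<bar> \<le> glued_dist p q"
    unfolding glued_dist_def using left.side_dist_nonneg right.side_dist_nonneg by auto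
  consider "p \<in> X" "q \<in> X" | "p \<in> Y" "q \<in> Y"
    | "p \<in> X - Y" "q \<in> Y - X" | "q \<in> X - Y" "p \<in> Y - X"
    using pq by blast
  then show ?thesis
  proof cases
    case 1 then show ?thesis using left.side_dist_pos[of p q] pq g by linarith
  next
    case 2 then show ?thesis using right.side_dist_pos[of p q] pq g by linarith
  next
    case 3
    then have "height p > 0" "height q < 0"
      using height_X height_Y left.seam_dist_pos right.seam_dist_pos by auto
    then show ?thesis using g by linarith
  next
    case 4
    then have "height q > 0" "height p < 0"
      using height_X height_Y left.seam_dist_pos right.seam_dist_pos by auto
    then show ?thesis using g by linarith
  qed
qed

lemma metric_space_glued_dist: "Metric_space (X \<union> Y) glued_dist"
proof
  show "0 \<le> glued_dist p q" for p q
    unfolding glued_dist_def using left.side_dist_nonneg right.side_dist_nonneg by (simp add: add_nonneg_nonneg)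
  show "glued_dist p q = glued_dist q p" for p q
    unfolding glued_dist_def using left.side_dist_commute right.side_dist_commute by (simp add: abs_minus_commute)
  show "glued_dist p q = 0 \<longleftrightarrow> p = q" if "p \<in> X \<union> Y" "q \<in> X \<union> Y" for p q
    using glued_dist_pos[OF that] left.side_dist_refl right.side_dist_refl
    by (force simp: glued_dist_def)
  show "glued_dist p r \<le> glued_dist p q + glued_dist q r" for p q r
    unfolding glued_dist_def
    using left.side_dist_triangle[of p r q] right.side_dist_triangle[of p r q] by linarith
qed

end

lemma glued_metric_exists:
  assumes mA: "Metric_space A dA" and mB: "Metric_space B dB" and F: "finite (A \<inter> B)"
   and MA: "MA > 0" and bA: "\<And>p q. p \<in> A \<Longrightarrow> q \<in> A \<Longrightarrow> dA p q \<le> MA"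
   and MB: "MB > 0" and bB: "\<And>p q. p \<in> B \<Longrightarrow> q \<in> B \<Longrightarrow> dB p q \<le> MB"
  obtains \<rho> LA LB where "Metric_space (A \<union> B) \<rho>" "LA > 0" "LB > 0"
    "\<forall>p\<in>A. \<forall>q\<in>A. \<rho> p q \<le> LA * dA p q" "\<forall>p\<in>B. \<forall>q\<in>B. \<rho> p q \<le> LB * dB p q"
proof -
  obtain kA where kA: "kA > 0" "\<forall>x\<in>A \<inter> B. \<forall>y\<in>A \<inter> B. x \<noteq> y \<longrightarrow> 1 \<le> kA * dA x y"
    using finite_separation_constant[OF mA F] by blast
  obtain kB where kB: "kB > 0" "\<forall>x\<in>A \<inter> B. \<forall>y\<in>A \<inter> B. x \<noteq> y \<longrightarrow> 1 \<le> kB * dB x y"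
    using finite_separation_constant[OF mB F] by blast
  have F': "finite (B \<inter> A)" using F by (simp add: Int_commute)
  interpret metric_gluing A B dA dB kA kB MA MB
    by (intro metric_gluing.intro gluing_side.intro mA mB F F' MA MB bA bB kA(1) kB(1))
      (use kA(2) kB(2) in auto)
  show ?thesis
  proof (rule that[OF metric_space_glued_dist])
    show "2 + real (card (B \<inter> A)) * MB * kA > 0" "2 + real (card (A \<inter> B)) * MA * kB > 0"
      using MA MB kA kB by (simp_all add: add_pos_nonneg)
  qed (use glued_dist_lipschitz_X glued_dist_lipschitz_Y in blast)+
qed

lemma set_diam_gt_lipschitz:
  assumes C: "C \<noteq> {}" "C \<subseteq> A" and L: "L > 0" and lip: "\<forall>p\<in>A. \<forall>q\<in>A. \<rho> p q \<le> L * dA p q"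
    and bd: "\<And>p q. p \<in> A \<Longrightarrow> q \<in> A \<Longrightarrow> dA p q \<le> M"
    and c: "c < set_diam \<rho> C"
  shows "c / L < set_diam dA C"
proof -
  have ne: "{\<rho> x y | x y. x \<in> C \<and> y \<in> C} \<noteq> {}" using C by blast
  obtain z where z: "z \<in> {\<rho> x y | x y. x \<in> C \<and> y \<in> C}" "c < z"
    using less_cSupD[OF ne] c unfolding set_diam_def by blast
  then obtain x y where xy: "x \<in> C" "y \<in> C" "c < \<rho> x y" by blast
  have "\<rho> x y \<le> L * dA x y" using lip xy C by blast
  then have "c < L * dA x y" using xy by linarith
  then have "c / L < dA x y" using L by (simp add: divide_less_eq mult.commute)
  moreover have "dA x y \<le> set_diam dA C" unfolding set_diam_def
  proof (rule cSup_upper)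
    show "dA x y \<in> {dA x y | x y. x \<in> C \<and> y \<in> C}" using xy by blast
    show "bdd_above {dA x y | x y. x \<in> C \<and> y \<in> C}"
      unfolding bdd_above_def using bd C by blast
  qed
  ultimately show ?thesis by linarith
qed

lemma mtopology_eq_compact_space:
  assumes cT: "compact_space T" and M: "Metric_space (topspace T) \<rho>"
    and nbhd: "\<And>q e. q \<in> topspace T \<Longrightarrow> e > 0 \<Longrightarrow> \<exists>U. openin T U \<and> q \<in> U \<and> (\<forall>z\<in>U. \<rho> q z < e)"
  shows "T = Metric_space.mtopology (topspace T) \<rho>"
proof -
  interpret m: Metric_space "topspace T" \<rho> by (rule M)
  have fine: "openin T S" if S: "openin m.mtopology S" for S
  proof (subst openin_subopen, intro ballI)
    fix x assume x: "x \<in> S"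
    obtain r where r: "r > 0" "m.mball x r \<subseteq> S" using S x m.openin_mtopology by blast
    have xT: "x \<in> topspace T" using S x m.openin_mtopology by blast
    obtain U where U: "openin T U" "x \<in> U" "\<forall>z\<in>U. \<rho> x z < r" using nbhd[OF xT r(1)] by blast
    have "U \<subseteq> m.mball x r"
    proof
      fix z assume "z \<in> U"
      then show "z \<in> m.mball x r" using U xT openin_subset by fastforce
    qed
    then show "\<exists>T'. openin T T' \<and> x \<in> T' \<and> T' \<subseteq> S" using U r by blast
  qed
  have "continuous_map T m.mtopology id"
    unfolding continuous_map_def
  proof (intro conjI allI impI)
    show "id \<in> topspace T \<rightarrow> topspace m.mtopology" by simp
    fix U assume U: "openin m.mtopology U"
    then have "{x \<in> topspace T. id x \<in> U} = U" using openin_subset[OF U] by auto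
    then show "openin T {x \<in> topspace T. id x \<in> U}" using fine[OF U] by simp
  qed
  then have cl: "closed_map T m.mtopology id"
    using cT m.Hausdorff_space_mtopology by (rule continuous_imp_closed_map)
  have "openin m.mtopology S" if S: "openin T S" for S
  proof -
    have "closedin T (topspace T - S)" using S by (simp add: closedin_diff)
    then have "closedin m.mtopology (id ` (topspace T - S))" using cl unfolding closed_map_def by blast
    then show ?thesis using openin_subset[OF S] by (simp add: openin_closedin_eq)
  qed
  with fine have "openin T S \<longleftrightarrow> openin m.mtopology S" for S by blast
  then show ?thesis by (simp add: topology_eq)
qed

lemma closedin_mtopology_nbhd:
  assumes A: "closedin T A" and mA: "Metric_space A dA"
    and tA: "subtopology T A = Metric_space.mtopology A dA"
    and q: "q \<in> topspace T" and r: "r > 0"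
  obtains U where "openin T U" "q \<in> U" "\<And>z. z \<in> U \<Longrightarrow> z \<in> A \<Longrightarrow> q \<in> A \<and> dA q z < r"
proof (cases "q \<in> A")
  case True
  interpret m: Metric_space A dA by (rule mA)
  have "openin (subtopology T A) (m.mball q r)" using tA by simp
  then obtain U where U: "openin T U" "m.mball q r = U \<inter> A" unfolding openin_subtopology by blast
  have "q \<in> m.mball q r" using True r by simp
  moreover have "q \<in> A \<and> dA q z < r" if "z \<in> U" "z \<in> A" for z
    using U(2) that True by (metis IntI m.in_mball)
  ultimately show ?thesis using that[of U] U by blast
next
  case False
  then show ?thesis using that[of "topspace T - A"] A q by blast
qed

lemma compatible_metric_closed_cover:
  assumes cT: "compact_space T" and A: "closedin T A" and B: "closedin T B"
    and AB: "A \<union> B = topspace T" and F: "finite (A \<inter> B)"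
    and mA: "Metric_space A dA" and tA: "subtopology T A = Metric_space.mtopology A dA"
    and MA: "MA > 0" and bA: "\<And>p q. p \<in> A \<Longrightarrow> q \<in> A \<Longrightarrow> dA p q \<le> MA"
    and mB: "Metric_space B dB" and tB: "subtopology T B = Metric_space.mtopology B dB"
    and MB: "MB > 0" and bB: "\<And>p q. p \<in> B \<Longrightarrow> q \<in> B \<Longrightarrow> dB p q \<le> MB"
  obtains \<rho> LA LB where "Metric_space (topspace T) \<rho>" "T = Metric_space.mtopology (topspace T) \<rho>"
    "LA > 0" "LB > 0" "\<forall>p\<in>A. \<forall>q\<in>A. \<rho> p q \<le> LA * dA p q" "\<forall>p\<in>B. \<forall>q\<in>B. \<rho> p q \<le> LB * dB p q"
proof -
  obtain \<rho> LA LB where G: "Metric_space (A \<union> B) \<rho>" "LA > 0" "LB > 0"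
     "\<forall>p\<in>A. \<forall>q\<in>A. \<rho> p q \<le> LA * dA p q" "\<forall>p\<in>B. \<forall>q\<in>B. \<rho> p q \<le> LB * dB p q"
    by (rule glued_metric_exists[OF mA mB F MA bA MB bB])
  have Mr: "Metric_space (topspace T) \<rho>" using G(1) AB by simp
  have "\<exists>U. openin T U \<and> q \<in> U \<and> (\<forall>z\<in>U. \<rho> q z < e)" if q: "q \<in> topspace T" and e: "e > 0" for q e
  proof -
    obtain UA where UA: "openin T UA" "q \<in> UA" "\<And>z. z \<in> UA \<Longrightarrow> z \<in> A \<Longrightarrow> q \<in> A \<and> dA q z < e / LA"
      using closedin_mtopology_nbhd[OF A mA tA q] e G(2) by (metis divide_pos_pos)
    obtain UB where UB: "openin T UB" "q \<in> UB" "\<And>z. z \<in> UB \<Longrightarrow> z \<in> B \<Longrightarrow> q \<in> B \<and> dB q z < e / LB"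
      using closedin_mtopology_nbhd[OF B mB tB q] e G(3) by (metis divide_pos_pos)
    have "\<rho> q z < e" if z: "z \<in> UA \<inter> UB" for z
    proof -
      have "z \<in> A \<or> z \<in> B" using openin_subset[OF UA(1)] z AB by blast
      then show ?thesis
      proof
        assume "z \<in> A"
        then have "q \<in> A" "dA q z < e / LA" "\<rho> q z \<le> LA * dA q z" using UA(3) z G(4) by auto
        then show ?thesis using G(2) by (simp add: pos_less_divide_eq mult.commute)
      next
        assume "z \<in> B"
        then have "q \<in> B" "dB q z < e / LB" "\<rho> q z \<le> LB * dB q z" using UB(3) z G(5) by auto
        then show ?thesis using G(3) by (simp add: pos_less_divide_eq mult.commute)
      qed
    qed
    then show ?thesis using UA(1,2) UB(1,2) by (intro exI[of _ "UA \<inter> UB"]) (simp add: openin_Int)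
  qed
  then have "T = Metric_space.mtopology (topspace T) \<rho>"
    using mtopology_eq_compact_space[OF cT Mr] by blast
  then show ?thesis using that Mr G(2-5) by blast
qed

section \<open>Peano spaces covered by two closed sets\<close>

lemma connected_components_of_closed_cover_side:
  assumes C: "C \<in> connected_components_of T" and A: "closedin T A" and B: "closedin T B"
    and AB: "A \<union> B = topspace T" and dis: "C \<inter> (A \<inter> B) = {}"
  shows "(C \<subseteq> A \<and> C \<in> connected_components_of (subtopology T A)) \<or>
         (C \<subseteq> B \<and> C \<in> connected_components_of (subtopology T B))"
proof -
  have Cc: "connectedin T C" using C by (rule connectedin_connected_components_of)
  have CT: "C \<subseteq> topspace T" using C by (rule connected_components_of_subset)
  have "\<not> (A \<inter> C \<noteq> {} \<and> B \<inter> C \<noteq> {})"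
    using Cc A B CT AB dis unfolding connectedin_closedin by blast
  then have "C \<subseteq> A \<or> C \<subseteq> B" using CT AB by blast
  then show ?thesis using connected_components_of_subtopology[OF C] by blast
qed

lemma connected_components_of_Int_eq_Union:
  assumes C: "C \<in> connected_components_of T"
  shows "C \<inter> A = \<Union>{G \<in> connected_components_of (subtopology T A). G \<subseteq> C}"
proof
  show "\<Union>{G \<in> connected_components_of (subtopology T A). G \<subseteq> C} \<subseteq> C \<inter> A"
  proof (intro Union_least, elim CollectE conjE)
    fix G assume "G \<in> connected_components_of (subtopology T A)" "G \<subseteq> C"
    then show "G \<subseteq> C \<inter> A" using connected_components_of_subset[of G "subtopology T A"] by auto
  qed
  show "C \<inter> A \<subseteq> \<Union>{G \<in> connected_components_of (subtopology T A). G \<subseteq> C}"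
  proof
    fix z assume z: "z \<in> C \<inter> A"
    then have zA: "z \<in> topspace (subtopology T A)"
      using connected_components_of_subset[OF C] by auto
    define G where "G = connected_component_of_set (subtopology T A) z"
    have G: "G \<in> connected_components_of (subtopology T A)" "z \<in> G"
      unfolding G_def using connected_component_of_set_mem[OF zA] by auto
    have "connectedin T G"
      using connectedin_connected_components_of[OF G(1)] by (simp add: connectedin_subtopology)
    then have "G \<subseteq> C" using connected_components_of_maximal[OF C] z G(2) by (auto simp: disjnt_def)
    with G show "z \<in> \<Union>{G \<in> connected_components_of (subtopology T A). G \<subseteq> C}" by blast
  qed
qed

lemma finite_connected_components_of_within:
  assumes cT: "compact_space T" and hT: "Hausdorff_space T" and A: "closedin T A"
    and F: "finite F" and fr: "T frontier_of A \<subseteq> F"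
    and C: "C \<in> connected_components_of T" and CF: "C \<inter> F \<noteq> {}"
  shows "finite {G \<in> connected_components_of (subtopology T A). G \<subseteq> C}"
proof (rule finite_subset)
  show "finite (connected_component_of_set (subtopology T A) ` F)" using F by simp
  show "{G \<in> connected_components_of (subtopology T A). G \<subseteq> C} \<subseteq>
    connected_component_of_set (subtopology T A) ` F"
  proof
    fix G assume "G \<in> {G \<in> connected_components_of (subtopology T A). G \<subseteq> C}"
    then have G: "G \<in> connected_components_of (subtopology T A)" and GC: "G \<subseteq> C" by auto
    have "G \<inter> F \<noteq> {}"
    proof
      assume GF: "G \<inter> F = {}"
      have "G \<in> connected_components_of T"
        using connected_components_of_subtopology_frontier[OF cT hT A finite_subset[OF fr F] G] GF fr
        by blast
      moreover have "\<not> disjnt G C"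
        using nonempty_connected_components_of[OF G] GC by (auto simp: disjnt_def)
      ultimately have "C \<subseteq> G"
        using connected_components_of_maximal connectedin_connected_components_of[OF C] by blast
      with GC GF CF show False by blast
    qed
    then obtain z where "z \<in> G" "z \<in> F" by blast
    then show "G \<in> connected_component_of_set (subtopology T A) ` F"
      using connected_components_of_eq_connected_component_of[OF G] by blast
  qed
qed

lemma peano_space_components_of_closedin:
  assumes A: "closedin T A" and P: "peano_space (subtopology T A)"
    and G: "G \<in> connected_components_of (subtopology T A)"
  shows "closedin T G" and "locally_connected_space (subtopology T G)"
proof -
  show "closedin T G" using closedin_connected_components_of[OF G] A by (rule closedin_trans_full)
  have "G \<subseteq> A" using connected_components_of_subset[OF G] by auto
  then show "locally_connected_space (subtopology T G)"
    using peano_space_locally_connected_components[OF P G]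
    by (simp add: subtopology_subtopology inf.absorb2)
qed

lemma locally_connected_space_component_closed_cover:
  assumes cT: "compact_space T" and hT: "Hausdorff_space T"
    and A: "closedin T A" and B: "closedin T B" and AB: "A \<union> B = topspace T"
    and F: "finite (A \<inter> B)"
    and PA: "peano_space (subtopology T A)" and PB: "peano_space (subtopology T B)"
    and C: "C \<in> connected_components_of T"
  shows "locally_connected_space (subtopology T C)"
proof (cases "C \<inter> (A \<inter> B) = {}")
  case True
  then consider "C \<in> connected_components_of (subtopology T A)"
    | "C \<in> connected_components_of (subtopology T B)"
    using connected_components_of_closed_cover_side[OF C A B AB] by blast
  then show ?thesis
    using peano_space_components_of_closedin(2)[OF A PA] peano_space_components_of_closedin(2)[OF B PB]
    by cases
next
  case False
  define GA where "GA = {G \<in> connected_components_of (subtopology T A). G \<subseteq> C}"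
  define GB where "GB = {G \<in> connected_components_of (subtopology T B). G \<subseteq> C}"
  have "finite GA" unfolding GA_def
    using finite_connected_components_of_within[OF cT hT A F frontier_of_closed_cover[OF A B AB] C False] .
  moreover have "finite GB" unfolding GB_def
    using finite_connected_components_of_within[OF cT hT B F _ C False]
      frontier_of_closed_cover[OF B A] AB by (simp add: Un_commute Int_commute)
  moreover have "C = \<Union>(GA \<union> GB)"
  proof -
    have "C = (C \<inter> A) \<union> (C \<inter> B)" using connected_components_of_subset[OF C] AB by auto
    then show ?thesis unfolding GA_def GB_def connected_components_of_Int_eq_Union[OF C] by blast
  qed
  moreover have "closedin T G \<and> locally_connected_space (subtopology T G)" if G: "G \<in> GA \<union> GB" for G
  proof -
    consider "G \<in> connected_components_of (subtopology T A)"
      | "G \<in> connected_components_of (subtopology T B)"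
      using G unfolding GA_def GB_def by blast
    then show ?thesis
      using peano_space_components_of_closedin[OF A PA] peano_space_components_of_closedin[OF B PB]
      by cases blast+
  qed
  ultimately show ?thesis
    using locally_connected_space_finite_Union_closedin[of "GA \<union> GB" T] by (metis finite_UnI)
qed

lemma peano_space_closed_cover:
  assumes cT: "compact_space T" and A: "closedin T A" and B: "closedin T B"
    and AB: "A \<union> B = topspace T" and F: "finite (A \<inter> B)"
    and PA: "peano_space (subtopology T A)" and PB: "peano_space (subtopology T B)"
  shows "peano_space T"
proof -
  obtain dA MA where dA: "Metric_space A dA" "subtopology T A = Metric_space.mtopology A dA"
    "\<forall>c>0. finite {C \<in> connected_components_of (subtopology T A). c < set_diam dA C}"
    "MA > 0" "\<And>p q. p \<in> A \<Longrightarrow> q \<in> A \<Longrightarrow> dA p q \<le> MA"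
    using peano_space_bounded_metric[OF PA] AB by blast
  obtain dB MB where dB: "Metric_space B dB" "subtopology T B = Metric_space.mtopology B dB"
    "\<forall>c>0. finite {C \<in> connected_components_of (subtopology T B). c < set_diam dB C}"
    "MB > 0" "\<And>p q. p \<in> B \<Longrightarrow> q \<in> B \<Longrightarrow> dB p q \<le> MB"
    using peano_space_bounded_metric[OF PB] AB by blast
  obtain \<rho> LA LB where R: "Metric_space (topspace T) \<rho>" "T = Metric_space.mtopology (topspace T) \<rho>"
    "LA > 0" "LB > 0" "\<forall>p\<in>A. \<forall>q\<in>A. \<rho> p q \<le> LA * dA p q" "\<forall>p\<in>B. \<forall>q\<in>B. \<rho> p q \<le> LB * dB p q"
    using compatible_metric_closed_cover[OF cT A B AB F dA(1,2,4,5) dB(1,2,4,5)] by blast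
  have hT: "Hausdorff_space T" using R(2) Metric_space.Hausdorff_space_mtopology[OF R(1)] by simp
  let ?I = "connected_component_of_set T ` (A \<inter> B)"
  have finI: "finite ?I" using F by simp
  have cases: "(C \<in> connected_components_of (subtopology T A) \<and> C \<subseteq> A) \<or>
               (C \<in> connected_components_of (subtopology T B) \<and> C \<subseteq> B) \<or> C \<in> ?I"
    if C: "C \<in> connected_components_of T" for C
  proof (cases "C \<inter> (A \<inter> B) = {}")
    case True then show ?thesis using connected_components_of_closed_cover_side[OF C A B AB] by blast
  next
    case False then show ?thesis using connected_components_of_eq_connected_component_of[OF C] by blast
  qed
  show ?thesis unfolding peano_space_def
  proof (intro conjI)
    show "compact_space T" by (rule cT)
    show "\<exists>M d. Metric_space M d \<and> T = Metric_space.mtopology M d \<and>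
        (\<forall>c>0. finite {C \<in> connected_components_of T. c < set_diam d C})"
    proof (intro exI conjI allI impI)
      fix c :: real assume c: "c > 0"
      have "{C \<in> connected_components_of T. c < set_diam \<rho> C} \<subseteq>
            {C \<in> connected_components_of (subtopology T A). c / LA < set_diam dA C} \<union>
            {C \<in> connected_components_of (subtopology T B). c / LB < set_diam dB C} \<union> ?I"
      proof
        fix C assume "C \<in> {C \<in> connected_components_of T. c < set_diam \<rho> C}"
        then have C: "C \<in> connected_components_of T" and cd: "c < set_diam \<rho> C" by auto
        have Cne: "C \<noteq> {}" using nonempty_connected_components_of[OF C] .
        show "C \<in> {C \<in> connected_components_of (subtopology T A). c / LA < set_diam dA C} \<union>
            {C \<in> connected_components_of (subtopology T B). c / LB < set_diam dB C} \<union> ?I"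
          using cases[OF C] set_diam_gt_lipschitz[OF Cne _ R(3) R(5) dA(5) cd]
            set_diam_gt_lipschitz[OF Cne _ R(4) R(6) dB(5) cd] by blast
      qed
      moreover have "finite ({C \<in> connected_components_of (subtopology T A). c / LA < set_diam dA C} \<union>
            {C \<in> connected_components_of (subtopology T B). c / LB < set_diam dB C} \<union> ?I)"
        using dA(3) dB(3) c R(3) R(4) finI by simp
      ultimately show "finite {C \<in> connected_components_of T. c < set_diam \<rho> C}" by (rule finite_subset)
    qed (use R in auto)
    have "countable ({C \<in> connected_components_of (subtopology T A). \<not> (\<exists>a. C = {a})} \<union>
          {C \<in> connected_components_of (subtopology T B). \<not> (\<exists>a. C = {a})} \<union> ?I)"
      using PA PB finI by (simp add: peano_space_def countable_finite)
    then show "countable {C \<in> connected_components_of T. \<not> (\<exists>a. C = {a})}"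
      by (rule countable_subset[rotated]) (use cases in blast)
    show "\<forall>C\<in>connected_components_of T. \<not> (\<exists>a. C = {a}) \<longrightarrow> locally_connected_space (subtopology T C)"
      using locally_connected_space_component_closed_cover[OF cT hT A B AB F PA PB] by blast
  qed
qed

lemma peano_space_closed_cover_iff:
  assumes "compact_space T" and A: "closedin T A" and B: "closedin T B"
    and AB: "A \<union> B = topspace T" and F: "finite (A \<inter> B)"
  shows "peano_space T \<longleftrightarrow> peano_space (subtopology T A) \<and> peano_space (subtopology T B)"
proof
  have "T frontier_of A \<subseteq> A \<inter> B" "T frontier_of B \<subseteq> A \<inter> B"
    using frontier_of_closed_cover[OF A B AB] frontier_of_closed_cover[OF B A] AB by auto
  then have "finite (T frontier_of A)" "finite (T frontier_of B)"
    using F by (meson finite_subset)+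
  then show "peano_space T \<Longrightarrow> peano_space (subtopology T A) \<and> peano_space (subtopology T B)"
    using peano_space_closedin_finite_frontier A B by blast
qed (use peano_space_closed_cover[OF assms] in blast)

section \<open>Monotone decompositions and their hyperspaces\<close>

lemma decomp_proj_eq:
  assumes D: "monotone_decomp K D" and d: "d \<in> D" and x: "x \<in> d"
  shows "decomp_proj D x = d"
  unfolding decomp_proj_def
proof (rule the_equality)
  show "d \<in> D \<and> x \<in> d" using d x by blast
  have disj: "\<forall>d\<in>D. \<forall>e\<in>D. d \<noteq> e \<longrightarrow> d \<inter> e = {}" using D unfolding monotone_decomp_def by simp
  fix e assume "e \<in> D \<and> x \<in> e"
  then show "e = d" using disj d x by blast
qed

lemma decomp_proj_in:
  assumes D: "monotone_decomp K D" and x: "x \<in> K"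
  shows "decomp_proj D x \<in> D" "x \<in> decomp_proj D x"
proof -
  have "\<Union>D = K" using D unfolding monotone_decomp_def by simp
  then obtain d where "d \<in> D" "x \<in> d" using x by blast
  then show "decomp_proj D x \<in> D" "x \<in> decomp_proj D x" using decomp_proj_eq[OF D] by auto
qed

lemma monotone_decomp_elem:
  assumes "monotone_decomp K D" and "d \<in> D"
  shows "d \<noteq> {}" "d \<subseteq> K"
proof -
  have "\<Union>D = K" "\<forall>d\<in>D. d \<noteq> {} \<and> compact d \<and> connected d"
    using assms(1) unfolding monotone_decomp_def by simp_all
  then show "d \<noteq> {}" "d \<subseteq> K" using assms(2) by auto
qed

lemma decomp_proj_image:
  assumes D: "monotone_decomp K D"
  shows "decomp_proj D ` K = D"
proof
  show "decomp_proj D ` K \<subseteq> D" using decomp_proj_in[OF D] by blast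
  show "D \<subseteq> decomp_proj D ` K"
  proof
    fix d assume d: "d \<in> D"
    then obtain x where "x \<in> d" using monotone_decomp_elem[OF D d] by blast
    then show "d \<in> decomp_proj D ` K"
      using decomp_proj_eq[OF D d] monotone_decomp_elem(2)[OF D d] by force
  qed
qed

lemma openin_decomp_topology:
  "openin (decomp_topology K D) W \<longleftrightarrow> W \<subseteq> D \<and> openin (top_of_set K) {x \<in> K. decomp_proj D x \<in> W}"
  unfolding decomp_topology_def topology_inverse'[OF istopology_decomp[of D K]] by (rule refl)

lemma topspace_decomp_topology:
  assumes D: "monotone_decomp K D"
  shows "topspace (decomp_topology K D) = D"
proof -
  have "{x \<in> K. decomp_proj D x \<in> D} = K" using decomp_proj_in[OF D] by blast
  then have "openin (decomp_topology K D) D" unfolding openin_decomp_topology by simp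
  then have "D \<subseteq> topspace (decomp_topology K D)" by (rule openin_subset)
  moreover have "topspace (decomp_topology K D) \<subseteq> D"
    using openin_topspace[of "decomp_topology K D"] unfolding openin_decomp_topology by blast
  ultimately show ?thesis by blast
qed

lemma quotient_map_decomp_proj:
  assumes D: "monotone_decomp K D"
  shows "quotient_map (top_of_set K) (decomp_topology K D) (decomp_proj D)"
  unfolding quotient_map_def
proof (intro conjI allI impI)
  show "decomp_proj D ` topspace (top_of_set K) = topspace (decomp_topology K D)"
    using decomp_proj_image[OF D] topspace_decomp_topology[OF D] by simp
  fix U assume "U \<subseteq> topspace (decomp_topology K D)"
  then show "openin (top_of_set K) {x \<in> topspace (top_of_set K). decomp_proj D x \<in> U} \<longleftrightarrow>
      openin (decomp_topology K D) U"
    by (simp add: openin_decomp_topology topspace_decomp_topology[OF D])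
qed

lemma compact_space_decomp_topology:
  assumes D: "monotone_decomp K D" and K: "compact K"
  shows "compact_space (decomp_topology K D)"
proof -
  have "compactin (top_of_set K) K" using K by (simp add: compactin_subtopology)
  then have "compactin (decomp_topology K D) (decomp_proj D ` K)"
    using quotient_imp_continuous_map[OF quotient_map_decomp_proj[OF D]] by (rule image_compactin)
  then show ?thesis
    unfolding compact_space_def using decomp_proj_image[OF D] topspace_decomp_topology[OF D] by simp
qed

lemma monotone_decomp_subset:
  assumes D: "monotone_decomp K D" and E: "E \<subseteq> D"
  shows "monotone_decomp (\<Union>E) E"
proof -
  have elems: "\<forall>d\<in>D. d \<noteq> {} \<and> compact d \<and> connected d" using D unfolding monotone_decomp_def by simp
  have disj: "\<forall>d\<in>D. \<forall>e\<in>D. d \<noteq> e \<longrightarrow> d \<inter> e = {}" using D unfolding monotone_decomp_def by simp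
  have usc: "\<forall>d\<in>D. \<forall>U. open U \<and> d \<subseteq> U \<longrightarrow>
        (\<exists>V. open V \<and> d \<subseteq> V \<and> (\<forall>e\<in>D. e \<inter> V \<noteq> {} \<longrightarrow> e \<subseteq> U))" using D unfolding monotone_decomp_def by simp
  have usc_E: "\<forall>d\<in>E. \<forall>U. open U \<and> d \<subseteq> U \<longrightarrow>
        (\<exists>V. open V \<and> d \<subseteq> V \<and> (\<forall>e\<in>E. e \<inter> V \<noteq> {} \<longrightarrow> e \<subseteq> U))"
  proof (intro ballI allI impI)
    fix d U assume d: "d \<in> E" and U: "open U \<and> d \<subseteq> U"
    have dD: "d \<in> D" using d E by blast
    obtain V where "open V" "d \<subseteq> V" "\<forall>e\<in>D. e \<inter> V \<noteq> {} \<longrightarrow> e \<subseteq> U"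
      using usc[rule_format, OF dD U] by (elim exE conjE)
    then show "\<exists>V. open V \<and> d \<subseteq> V \<and> (\<forall>e\<in>E. e \<inter> V \<noteq> {} \<longrightarrow> e \<subseteq> U)" using E by blast
  qed
  show ?thesis unfolding monotone_decomp_def
  proof (intro conjI)
    show "\<forall>d\<in>E. d \<noteq> {} \<and> compact d \<and> connected d" using elems E by blast
    show "\<forall>d\<in>E. \<forall>e\<in>E. d \<noteq> e \<longrightarrow> d \<inter> e = {}" using disj E by blast
  qed (rule refl, rule usc_E)
qed

lemma decomp_topology_eq_quotient_map:
  assumes E: "monotone_decomp S E" and q: "quotient_map (top_of_set S) Y f"
    and topY: "topspace Y = E" and f: "\<And>x. x \<in> S \<Longrightarrow> f x = decomp_proj E x"
  shows "decomp_topology S E = Y"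
proof -
  have "openin (decomp_topology S E) W \<longleftrightarrow> openin Y W" for W
  proof (cases "W \<subseteq> E")
    case True
    then have "openin (top_of_set S) {x \<in> topspace (top_of_set S). f x \<in> W} \<longleftrightarrow> openin Y W"
      using q topY unfolding quotient_map_def by (elim conjE allE impE) simp_all
    moreover have "{x \<in> S. f x \<in> W} = {x \<in> S. decomp_proj E x \<in> W}"
      using f by (simp cong: conj_cong)
    ultimately show ?thesis using True by (simp add: openin_decomp_topology)
  next
    case False
    have "\<not> openin Y W" using openin_subset[of Y W] topY False by blast
    moreover have "\<not> openin (decomp_topology S E) W" unfolding openin_decomp_topology using False by blast
    ultimately show ?thesis by blast
  qed
  then show ?thesis by (simp add: topology_eq)
qed

text \<open>As the projection is a quotient map, the hyperspace of a closed saturated set S is a closed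
  subspace of the hyperspace of D.\<close>

lemma monotone_decomp_saturated:
  assumes D: "monotone_decomp K D" and S: "closedin (top_of_set K) S"
    and sat: "\<forall>e\<in>D. e \<inter> S \<noteq> {} \<longrightarrow> e \<subseteq> S"
  shows "monotone_decomp S {e \<in> D. e \<subseteq> S}"
    and "closedin (decomp_topology K D) {e \<in> D. e \<subseteq> S}"
    and "decomp_topology S {e \<in> D. e \<subseteq> S} = subtopology (decomp_topology K D) {e \<in> D. e \<subseteq> S}"
proof -
  let ?E = "{e \<in> D. e \<subseteq> S}" and ?Q = "decomp_topology K D"
  have SK: "S \<subseteq> K" using closedin_imp_subset[OF S] .
  have proj_in_E: "decomp_proj D x \<in> ?E" if "x \<in> S" for x
  proof -
    have "decomp_proj D x \<in> D" "x \<in> decomp_proj D x" using decomp_proj_in[OF D] that SK by auto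
    then show ?thesis using sat that by blast
  qed
  have pre: "{x \<in> topspace (top_of_set K). decomp_proj D x \<in> ?E} = S"
  proof (intro set_eqI iffI)
    fix x assume "x \<in> {x \<in> topspace (top_of_set K). decomp_proj D x \<in> ?E}"
    then show "x \<in> S" using decomp_proj_in(2)[OF D, of x] by auto
  qed (use proj_in_E SK in auto)
  have UE: "\<Union>?E = S"
  proof
    show "S \<subseteq> \<Union>?E"
    proof
      fix x assume "x \<in> S"
      then show "x \<in> \<Union>?E" using proj_in_E decomp_proj_in(2)[OF D, of x] SK by blast
    qed
  qed blast
  show mE: "monotone_decomp S ?E" using monotone_decomp_subset[OF D, of ?E] UE by auto
  have q: "quotient_map (top_of_set K) ?Q (decomp_proj D)" by (rule quotient_map_decomp_proj[OF D])
  have "?E \<subseteq> topspace ?Q" using topspace_decomp_topology[OF D] by auto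
  then have "closedin (top_of_set K) {x \<in> topspace (top_of_set K). decomp_proj D x \<in> ?E} \<longleftrightarrow>
      closedin ?Q ?E"
    using q unfolding quotient_map_closedin by (elim conjE allE impE)
  then show cl: "closedin ?Q ?E" using pre S by simp
  have "quotient_map (subtopology (top_of_set K) S) (subtopology ?Q ?E) (decomp_proj D)"
    using quotient_map_restriction[OF q pre disjI2[OF cl]] .
  moreover have "subtopology (top_of_set K) S = top_of_set S"
    by (simp add: subtopology_subtopology Int_absorb1[OF SK])
  ultimately have qE: "quotient_map (top_of_set S) (subtopology ?Q ?E) (decomp_proj D)" by simp
  have proj: "decomp_proj D x = decomp_proj ?E x" if "x \<in> S" for x
    using decomp_proj_eq[OF D _ decomp_proj_in(2)[OF mE that]] decomp_proj_in(1)[OF mE that] by simp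
  have "topspace (subtopology ?Q ?E) = ?E" using topspace_decomp_topology[OF D] by auto
  then show "decomp_topology S ?E = subtopology ?Q ?E"
    using decomp_topology_eq_quotient_map[OF mE qE] proj by simp
qed

lemma singleton_mem_monotone_decomp:
  assumes D: "monotone_decomp K D" and x: "x \<in> K" and s: "\<forall>d\<in>D. x \<in> d \<longrightarrow> d = {x}"
  shows "{x} \<in> D"
  using decomp_proj_in[OF D x] s by metis

lemma monotone_decomp_Un_usc:
  fixes K1 K2 :: "'a::t2_space set"
  assumes D1: "monotone_decomp K1 D1" and D2: "monotone_decomp K2 D2" and K2: "compact K2"
    and s1: "\<forall>x \<in> K1 \<inter> K2. \<forall>d \<in> D1. x \<in> d \<longrightarrow> d = {x}"
    and s2: "\<forall>x \<in> K1 \<inter> K2. \<forall>d \<in> D2. x \<in> d \<longrightarrow> d = {x}"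
    and d: "d \<in> D1" and U: "open U" "d \<subseteq> U"
  shows "\<exists>V. open V \<and> d \<subseteq> V \<and> (\<forall>e\<in>D1 \<union> D2. e \<inter> V \<noteq> {} \<longrightarrow> e \<subseteq> U)"
proof -
  have usc1: "\<forall>d\<in>D1. \<forall>U. open U \<and> d \<subseteq> U \<longrightarrow>
        (\<exists>V. open V \<and> d \<subseteq> V \<and> (\<forall>e\<in>D1. e \<inter> V \<noteq> {} \<longrightarrow> e \<subseteq> U))" using D1 unfolding monotone_decomp_def by simp
  have usc2: "\<forall>d\<in>D2. \<forall>U. open U \<and> d \<subseteq> U \<longrightarrow>
        (\<exists>V. open V \<and> d \<subseteq> V \<and> (\<forall>e\<in>D2. e \<inter> V \<noteq> {} \<longrightarrow> e \<subseteq> U))" using D2 unfolding monotone_decomp_def by simp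
  have UU: "open U \<and> d \<subseteq> U" using U by blast
  obtain V1 where V1: "open V1" "d \<subseteq> V1" "\<forall>e\<in>D1. e \<inter> V1 \<noteq> {} \<longrightarrow> e \<subseteq> U"
    using usc1[rule_format, OF d UU] by (elim exE conjE)
  have dK1: "d \<subseteq> K1" using monotone_decomp_elem(2)[OF D1 d] .
  show ?thesis
  proof (cases "d \<inter> K2 = {}")
    case True
    have "open (V1 - K2)" using V1(1) K2 by (simp add: compact_imp_closed open_Diff)
    moreover have "d \<subseteq> V1 - K2" using V1(2) True by blast
    moreover have "\<forall>e\<in>D1 \<union> D2. e \<inter> (V1 - K2) \<noteq> {} \<longrightarrow> e \<subseteq> U"
    proof (intro ballI impI)
      fix e assume e: "e \<in> D1 \<union> D2" and ne: "e \<inter> (V1 - K2) \<noteq> {}"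
      show "e \<subseteq> U"
      proof (cases "e \<in> D1")
        case True then show ?thesis using V1(3) ne by blast
      next
        case False
        then have "e \<subseteq> K2" using e monotone_decomp_elem(2)[OF D2] by blast
        then show ?thesis using ne by blast
      qed
    qed
    ultimately show ?thesis by blast
  next
    case False
    then obtain z where z: "z \<in> d" "z \<in> K2" by blast
    have zF: "z \<in> K1 \<inter> K2" using z dK1 by blast
    have dz: "d = {z}" using s1 zF d z(1) by blast
    have zD2: "{z} \<in> D2" using singleton_mem_monotone_decomp[OF D2 z(2)] s2 zF by blast
    have UU2: "open U \<and> {z} \<subseteq> U" using U dz by blast
    obtain V2 where V2: "open V2" "{z} \<subseteq> V2" "\<forall>e\<in>D2. e \<inter> V2 \<noteq> {} \<longrightarrow> e \<subseteq> U"
      using usc2[rule_format, OF zD2 UU2] by (elim exE conjE)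
    have "open (V1 \<inter> V2)" using V1(1) V2(1) by blast
    moreover have "d \<subseteq> V1 \<inter> V2" using V1(2) V2(2) dz by blast
    moreover have "\<forall>e\<in>D1 \<union> D2. e \<inter> (V1 \<inter> V2) \<noteq> {} \<longrightarrow> e \<subseteq> U"
      using V1(3) V2(3) by blast
    ultimately show ?thesis by blast
  qed
qed

lemma monotone_decomp_Un:
  fixes K1 K2 :: "'a::t2_space set"
  assumes D1: "monotone_decomp K1 D1" and D2: "monotone_decomp K2 D2"
    and K1: "compact K1" and K2: "compact K2"
    and s1: "\<forall>x \<in> K1 \<inter> K2. \<forall>d \<in> D1. x \<in> d \<longrightarrow> d = {x}"
    and s2: "\<forall>x \<in> K1 \<inter> K2. \<forall>d \<in> D2. x \<in> d \<longrightarrow> d = {x}"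
  shows "monotone_decomp (K1 \<union> K2) (D1 \<union> D2)"
proof -
  have u1: "\<Union>D1 = K1" and e1: "\<forall>d\<in>D1. d \<noteq> {} \<and> compact d \<and> connected d"
    and j1: "\<forall>d\<in>D1. \<forall>e\<in>D1. d \<noteq> e \<longrightarrow> d \<inter> e = {}"
    using D1 unfolding monotone_decomp_def by simp_all
  have u2: "\<Union>D2 = K2" and e2: "\<forall>d\<in>D2. d \<noteq> {} \<and> compact d \<and> connected d"
    and j2: "\<forall>d\<in>D2. \<forall>e\<in>D2. d \<noteq> e \<longrightarrow> d \<inter> e = {}"
    using D2 unfolding monotone_decomp_def by simp_all
  have eq: "d = e" if d: "d \<in> D1 \<union> D2" and e: "e \<in> D1 \<union> D2" and z: "z \<in> d" "z \<in> e" for d e z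
  proof (cases "z \<in> K1 \<inter> K2")
    case True
    then show ?thesis using s1 s2 d e z by blast
  next
    case False
    then have "d \<in> D1 \<and> e \<in> D1 \<or> d \<in> D2 \<and> e \<in> D2" using d e z u1 u2 by blast
    then show ?thesis using j1 j2 z by blast
  qed
  have s1': "\<forall>x \<in> K2 \<inter> K1. \<forall>d \<in> D1. x \<in> d \<longrightarrow> d = {x}"
    and s2': "\<forall>x \<in> K2 \<inter> K1. \<forall>d \<in> D2. x \<in> d \<longrightarrow> d = {x}" using s1 s2 by blast+
  show ?thesis unfolding monotone_decomp_def
  proof (intro conjI)
    show "\<Union>(D1 \<union> D2) = K1 \<union> K2" using u1 u2 by blast
    show "\<forall>d\<in>D1 \<union> D2. d \<noteq> {} \<and> compact d \<and> connected d" using e1 e2 by blast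
    show "\<forall>d\<in>D1 \<union> D2. \<forall>e\<in>D1 \<union> D2. d \<noteq> e \<longrightarrow> d \<inter> e = {}" using eq by blast
    show "\<forall>d\<in>D1 \<union> D2. \<forall>U. open U \<and> d \<subseteq> U \<longrightarrow>
        (\<exists>V. open V \<and> d \<subseteq> V \<and> (\<forall>e\<in>D1 \<union> D2. e \<inter> V \<noteq> {} \<longrightarrow> e \<subseteq> U))"
    proof (intro ballI allI impI)
      fix d U assume d: "d \<in> D1 \<union> D2" and U: "open U \<and> d \<subseteq> U"
      show "\<exists>V. open V \<and> d \<subseteq> V \<and> (\<forall>e\<in>D1 \<union> D2. e \<inter> V \<noteq> {} \<longrightarrow> e \<subseteq> U)"
      proof (cases "d \<in> D1")
        case True
        then show ?thesis using monotone_decomp_Un_usc[OF D1 D2 K2 s1 s2 True] U by blast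
      next
        case False
        then have "d \<in> D2" using d by blast
        then show ?thesis using monotone_decomp_Un_usc[OF D2 D1 K1 s2' s1'] U by (simp add: Un_commute)
      qed
    qed
  qed
qed

lemma monotone_decomp_Un_side:
  assumes D1: "monotone_decomp K1 D1" and D2: "monotone_decomp K2 D2"
    and s1: "\<forall>x \<in> K1 \<inter> K2. \<forall>d \<in> D1. x \<in> d \<longrightarrow> d = {x}"
    and s2: "\<forall>x \<in> K1 \<inter> K2. \<forall>d \<in> D2. x \<in> d \<longrightarrow> d = {x}"
  shows "{e \<in> D1 \<union> D2. e \<subseteq> K1} = D1"
proof
  show "D1 \<subseteq> {e \<in> D1 \<union> D2. e \<subseteq> K1}" using monotone_decomp_elem(2)[OF D1] by blast
  show "{e \<in> D1 \<union> D2. e \<subseteq> K1} \<subseteq> D1"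
  proof
    fix e assume e: "e \<in> {e \<in> D1 \<union> D2. e \<subseteq> K1}"
    show "e \<in> D1"
    proof (cases "e \<in> D1")
      case False
      then have eD2: "e \<in> D2" using e by blast
      obtain z where z: "z \<in> e" using monotone_decomp_elem(1)[OF D2 eD2] by blast
      have zF: "z \<in> K1 \<inter> K2" using z e monotone_decomp_elem(2)[OF D2 eD2] by blast
      then have "e = {z}" using s2 eD2 z by blast
      moreover have "{z} \<in> D1" using singleton_mem_monotone_decomp[OF D1] zF s1 by blast
      ultimately show ?thesis by auto
    qed
  qed
qed

lemma monotone_decomp_refines_antisym:
  assumes D: "monotone_decomp K D" and D': "monotone_decomp K D'"
    and DD': "\<forall>d\<in>D. \<exists>d'\<in>D'. d \<subseteq> d'" and D'D: "\<forall>d'\<in>D'. \<exists>d\<in>D. d' \<subseteq> d"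
  shows "D = D'"
proof -
  have "E \<subseteq> E'"
    if E: "monotone_decomp K E" and EE': "\<forall>d\<in>E. \<exists>d'\<in>E'. d \<subseteq> d'"
      and E'E: "\<forall>d'\<in>E'. \<exists>d\<in>E. d' \<subseteq> d" for E E'
  proof
    fix d assume d: "d \<in> E"
    obtain d' where d': "d' \<in> E'" "d \<subseteq> d'" using EE' d by blast
    obtain d'' where d'': "d'' \<in> E" "d' \<subseteq> d''" using E'E d'(1) by blast
    have disj: "\<forall>d\<in>E. \<forall>e\<in>E. d \<noteq> e \<longrightarrow> d \<inter> e = {}" using E unfolding monotone_decomp_def by simp
    have "d \<inter> d'' \<noteq> {}" using monotone_decomp_elem(1)[OF E d] d'(2) d''(2) by blast
    then have "d = d''" using disj d d''(1) by blast
    then have "d' = d" using d'(2) d''(2) by (intro subset_antisym) simp_all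
    then show "d \<in> E'" using d'(1) by simp
  qed
  from this[OF D DD' D'D] this[OF D' D'D DD'] show ?thesis by (rule subset_antisym)
qed

text \<open>The hyperspace of D is covered by the closed hyperspaces of the two sides, which meet in
  finitely many points.\<close>

lemma peano_decomp_Un_iff:
  fixes K1 K2 :: "'a::t2_space set"
  assumes D: "monotone_decomp (K1 \<union> K2) D" and K1: "compact K1" and K2: "compact K2"
    and F: "finite (K1 \<inter> K2)"
    and sides: "\<forall>e\<in>D. e \<subseteq> K1 \<or> e \<subseteq> K2"
    and sing: "\<forall>e\<in>D. \<forall>x\<in>K1 \<inter> K2. x \<in> e \<longrightarrow> e = {x}"
  shows "monotone_decomp K1 {e \<in> D. e \<subseteq> K1}" and "monotone_decomp K2 {e \<in> D. e \<subseteq> K2}"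
    and "peano_space (decomp_topology (K1 \<union> K2) D) \<longleftrightarrow>
      peano_space (decomp_topology K1 {e \<in> D. e \<subseteq> K1}) \<and>
      peano_space (decomp_topology K2 {e \<in> D. e \<subseteq> K2})"
proof -
  let ?Q = "decomp_topology (K1 \<union> K2) D"
  have sat: "\<forall>e\<in>D. e \<inter> K1 \<noteq> {} \<longrightarrow> e \<subseteq> K1" "\<forall>e\<in>D. e \<inter> K2 \<noteq> {} \<longrightarrow> e \<subseteq> K2"
    using sides sing by blast+
  have "closedin (top_of_set (K1 \<union> K2)) K1" "closedin (top_of_set (K1 \<union> K2)) K2"
    using closed_subset[OF _ compact_imp_closed[OF K1]] closed_subset[OF _ compact_imp_closed[OF K2]]
    by simp_all
  note S1 = monotone_decomp_saturated[OF D this(1) sat(1)]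
    and S2 = monotone_decomp_saturated[OF D this(2) sat(2)]
  show "monotone_decomp K1 {e \<in> D. e \<subseteq> K1}" "monotone_decomp K2 {e \<in> D. e \<subseteq> K2}"
    using S1(1) S2(1) .
  have cover: "{e \<in> D. e \<subseteq> K1} \<union> {e \<in> D. e \<subseteq> K2} = topspace ?Q"
    unfolding topspace_decomp_topology[OF D] using sides by blast
  have "{e \<in> D. e \<subseteq> K1} \<inter> {e \<in> D. e \<subseteq> K2} \<subseteq> (\<lambda>x. {x}) ` (K1 \<inter> K2)"
  proof
    fix e assume e: "e \<in> {e \<in> D. e \<subseteq> K1} \<inter> {e \<in> D. e \<subseteq> K2}"
    then have eD: "e \<in> D" by blast
    then obtain x where x: "x \<in> e" using monotone_decomp_elem(1)[OF D] by blast
    then have "x \<in> K1 \<inter> K2" using e by blast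
    moreover from this have "e = {x}" using sing eD x by blast
    ultimately show "e \<in> (\<lambda>x. {x}) ` (K1 \<inter> K2)" by (rule rev_image_eqI)
  qed
  then have "finite ({e \<in> D. e \<subseteq> K1} \<inter> {e \<in> D. e \<subseteq> K2})"
    using finite_subset finite_imageI[OF F] by blast
  then show "peano_space ?Q \<longleftrightarrow> peano_space (decomp_topology K1 {e \<in> D. e \<subseteq> K1}) \<and>
      peano_space (decomp_topology K2 {e \<in> D. e \<subseteq> K2})"
    unfolding S1(3) S2(3)
    by (rule peano_space_closed_cover_iff[OF compact_space_decomp_topology[OF D compact_Un[OF K1 K2]]
          S1(2) S2(2) cover])
qed

lemma monotone_decomp_refines_Un:
  assumes D1: "monotone_decomp K1 D1" and D2: "monotone_decomp K2 D2"
    and s1: "\<forall>x \<in> K1 \<inter> K2. \<forall>d \<in> D1. x \<in> d \<longrightarrow> d = {x}"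
    and s2: "\<forall>x \<in> K1 \<inter> K2. \<forall>d \<in> D2. x \<in> d \<longrightarrow> d = {x}"
    and ref: "\<forall>e\<in>D. \<exists>d\<in>D1 \<union> D2. e \<subseteq> d"
  shows "\<forall>e\<in>D. e \<subseteq> K1 \<or> e \<subseteq> K2" and "\<forall>e\<in>D. \<forall>x\<in>K1 \<inter> K2. x \<in> e \<longrightarrow> e = {x}"
proof -
  have "\<forall>d\<in>D1 \<union> D2. d \<subseteq> K1 \<or> d \<subseteq> K2"
    using monotone_decomp_elem(2)[OF D1] monotone_decomp_elem(2)[OF D2] by blast
  then show "\<forall>e\<in>D. e \<subseteq> K1 \<or> e \<subseteq> K2" using ref by (meson subset_trans)
  show "\<forall>e\<in>D. \<forall>x\<in>K1 \<inter> K2. x \<in> e \<longrightarrow> e = {x}"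
  proof (intro ballI impI)
    fix e x assume "e \<in> D" "x \<in> K1 \<inter> K2" "x \<in> e"
    moreover obtain d where "d \<in> D1 \<union> D2" "e \<subseteq> d" using ref \<open>e \<in> D\<close> by blast
    ultimately show "e = {x}" using s1 s2 by blast
  qed
qed

lemma peano_space_decomp_Un:
  fixes K1 K2 :: "'a::t2_space set"
  assumes D1: "monotone_decomp K1 D1" and D2: "monotone_decomp K2 D2"
    and K1: "compact K1" and K2: "compact K2" and F: "finite (K1 \<inter> K2)"
    and s1: "\<forall>x \<in> K1 \<inter> K2. \<forall>d \<in> D1. x \<in> d \<longrightarrow> d = {x}"
    and s2: "\<forall>x \<in> K1 \<inter> K2. \<forall>d \<in> D2. x \<in> d \<longrightarrow> d = {x}"
    and P1: "peano_space (decomp_topology K1 D1)" and P2: "peano_space (decomp_topology K2 D2)"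
  shows "peano_space (decomp_topology (K1 \<union> K2) (D1 \<union> D2))"
proof -
  have "\<forall>e\<in>D1 \<union> D2. \<exists>d\<in>D1 \<union> D2. e \<subseteq> d" by blast
  note split = monotone_decomp_refines_Un[OF D1 D2 s1 s2 this]
  have "{e \<in> D1 \<union> D2. e \<subseteq> K1} = D1" by (rule monotone_decomp_Un_side[OF D1 D2 s1 s2])
  moreover have "{e \<in> D1 \<union> D2. e \<subseteq> K2} = D2"
    using monotone_decomp_Un_side[OF D2 D1] s1 s2 by (simp add: Int_commute Un_commute)
  ultimately show ?thesis
    using peano_decomp_Un_iff(3)[OF monotone_decomp_Un[OF D1 D2 K1 K2 s1 s2] K1 K2 F split] P1 P2
    by simp
qed

lemma is_DPS_D:
  assumes "is_DPS K D"
  shows "monotone_decomp K D" and "peano_space (decomp_topology K D)"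
    and "monotone_decomp K E \<Longrightarrow> peano_space (decomp_topology K E) \<Longrightarrow> \<forall>d\<in>D. \<exists>e\<in>E. d \<subseteq> e"
  using assms unfolding is_DPS_def by blast+

theorem lemma10p5:
  fixes K1 K2 :: "complex set" and D1 D2 D :: "complex set set"
  assumes "compact K1" and "compact K2" and "finite (K1 \<inter> K2)"
    and "is_DPS K1 D1" and "is_DPS K2 D2" and "is_DPS (K1 \<union> K2) D"
    and "\<forall>x \<in> K1 \<inter> K2. \<forall>d \<in> D1. x \<in> d \<longrightarrow> d = {x}"
    and "\<forall>x \<in> K1 \<inter> K2. \<forall>d \<in> D2. x \<in> d \<longrightarrow> d = {x}"
  shows "D = D1 \<union> D2 \<and> (\<forall>x \<in> K1 \<inter> K2. {x} \<in> D)"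
proof -
  note K = assms(1-3) and s = assms(7,8)
  note D1 = is_DPS_D[OF assms(4)] and D2 = is_DPS_D[OF assms(5)] and D = is_DPS_D[OF assms(6)]
  have D12: "monotone_decomp (K1 \<union> K2) (D1 \<union> D2)" by (rule monotone_decomp_Un[OF D1(1) D2(1) K(1,2) s])
  have "peano_space (decomp_topology (K1 \<union> K2) (D1 \<union> D2))"
    by (rule peano_space_decomp_Un[OF D1(1) D2(1) K s D1(2) D2(2)])
  then have ref: "\<forall>e\<in>D. \<exists>d\<in>D1 \<union> D2. e \<subseteq> d" by (rule D(3)[OF D12])
  note split = peano_decomp_Un_iff[OF D(1) K monotone_decomp_refines_Un[OF D1(1) D2(1) s ref]]
  have "peano_space (decomp_topology K1 {e \<in> D. e \<subseteq> K1})"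
    and "peano_space (decomp_topology K2 {e \<in> D. e \<subseteq> K2})" using split(3) D(2) by simp_all
  then have "\<forall>d\<in>D1. \<exists>e\<in>{e \<in> D. e \<subseteq> K1}. d \<subseteq> e" and "\<forall>d\<in>D2. \<exists>e\<in>{e \<in> D. e \<subseteq> K2}. d \<subseteq> e"
    using D1(3)[OF split(1)] D2(3)[OF split(2)] by simp_all
  then have "\<forall>d\<in>D1 \<union> D2. \<exists>e\<in>D. d \<subseteq> e" unfolding Ball_def Bex_def by blast
  then have eq: "D = D1 \<union> D2" by (rule monotone_decomp_refines_antisym[OF D(1) D12 ref])
  have "{x} \<in> D1" if "x \<in> K1 \<inter> K2" for x
    using singleton_mem_monotone_decomp[OF D1(1)] assms(7) that by blast
  with eq show ?thesis by blast
qed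

end
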